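(* Let $u,v\in G$ be cyclically minimal root elements which are blocks, and let $g\in G$ satisfy $u^g=g^{-1}\circ u\circ g$. If $u\in C(v)$ and $u^g\in C(v)$, then $g\in C(v)$.
   Context: Let $\Gamma$ be a finite simple undirected graph with vertex set $X$, and let $G=G(\Gamma)=\langle X\mid [x,y]=1 \text{ whenever } x,y \text{ are joined by an edge of }\Gamma\rangle$ be the (free) partially commutative group with commutation graph $\Gamma$. For a word $w$ over $X\cup X^{-1}$, $\alpha(w)$ is the set of $x\in X$ such that $x$ or $x^{-1}$ occurs in $w$. A word is minimal if no shorter word represents the same element of $G$. For $g\in G$, $l(g)$ is the length of a minimal word representing $g$, and $\alpha(g)=\alpha(w)$ for any minimal word $w$ representing $g$. For $g_1,\dots,g_r\in G$, $g_1\circ\cdots\circ g_r$ denotes the product together with the assertion $l(g_1\cdots g_r)=l(g_1)+\cdots+l(g_r)$. We write $g^h=h^{-1}gh$; $C(S)$ is the centraliser of $S$ in $G$. An element $g$ is cyclically minimal if $l(g)\le l(h^{-1}gh)$ for all $h\in G$. For $Z\subseteq X$, $\Phi(Z)$ is the graph with vertex set $Z$ in which $x\ne y$ are joined iff $xy\ne yx$ in $G$; a cyclically minimal element $g$ is a block if $\Phi(\alpha(g))$ is connected. An element $g\in G$ is a root element if $g$ is not of the form $h^n$ for any $h\in G$ and integer $n\ge2$. *)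

theory Defs
  imports Main
begin

text \<open>The vertex set X is the (finite) type 'a;
  the commutation graph is a symmetric irreflexive relation E on 'a.
  A letter (x, False) stands for x, (x, True) for x^-1.
  Elements of G are represented by words; equality in G is pc_eq E.\<close>

type_synonym 'a letter = "'a \<times> bool"

definition inv_letter :: "'a letter \<Rightarrow> 'a letter" where
  "inv_letter l = (fst l, \<not> snd l)"

definition inv_word :: "'a letter list \<Rightarrow> 'a letter list" where
  "inv_word w = rev (map inv_letter w)"

inductive pc_step :: "('a \<Rightarrow> 'a \<Rightarrow> bool) \<Rightarrow> 'a letter list \<Rightarrow> 'a letter list \<Rightarrow> bool"
  for E where
  cancel: "pc_step E (xs @ [(x, b), (x, \<not> b)] @ ys) (xs @ ys)"
| commute: "E x y \<Longrightarrow> pc_step E (xs @ [(x, b), (y, c)] @ ys) (xs @ [(y, c), (x, b)] @ ys)"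

definition pc_eq :: "('a \<Rightarrow> 'a \<Rightarrow> bool) \<Rightarrow> 'a letter list \<Rightarrow> 'a letter list \<Rightarrow> bool" where
  "pc_eq E = (sup (pc_step E) (pc_step E)\<inverse>\<inverse>)\<^sup>*\<^sup>*"

definition pc_minimal :: "('a \<Rightarrow> 'a \<Rightarrow> bool) \<Rightarrow> 'a letter list \<Rightarrow> bool" where
  "pc_minimal E w = (\<forall>w'. pc_eq E w w' \<longrightarrow> length w \<le> length w')"

definition pc_len :: "('a \<Rightarrow> 'a \<Rightarrow> bool) \<Rightarrow> 'a letter list \<Rightarrow> nat" where
  "pc_len E w = (LEAST n. \<exists>w'. pc_eq E w w' \<and> length w' = n)"

definition pc_alpha :: "('a \<Rightarrow> 'a \<Rightarrow> bool) \<Rightarrow> 'a letter list \<Rightarrow> 'a set" where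
  "pc_alpha E w = fst ` set (SOME w'. pc_eq E w w' \<and> pc_minimal E w')"

definition cyc_minimal :: "('a \<Rightarrow> 'a \<Rightarrow> bool) \<Rightarrow> 'a letter list \<Rightarrow> bool" where
  "cyc_minimal E w = (\<forall>h. pc_len E w \<le> pc_len E (inv_word h @ w @ h))"

definition gens_commute :: "('a \<Rightarrow> 'a \<Rightarrow> bool) \<Rightarrow> 'a \<Rightarrow> 'a \<Rightarrow> bool" where
  "gens_commute E x y = pc_eq E [(x, False), (y, False)] [(y, False), (x, False)]"

definition Phi_connected :: "('a \<Rightarrow> 'a \<Rightarrow> bool) \<Rightarrow> 'a set \<Rightarrow> bool" where
  "Phi_connected E Z = (\<forall>x\<in>Z. \<forall>y\<in>Z.
     (\<lambda>a b. a \<in> Z \<and> b \<in> Z \<and> a \<noteq> b \<and> \<not> gens_commute E a b)\<^sup>*\<^sup>* x y)"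

definition is_block :: "('a \<Rightarrow> 'a \<Rightarrow> bool) \<Rightarrow> 'a letter list \<Rightarrow> bool" where
  "is_block E w = (cyc_minimal E w \<and> Phi_connected E (pc_alpha E w))"

definition word_pow :: "'a letter list \<Rightarrow> nat \<Rightarrow> 'a letter list" where
  "word_pow w n = concat (replicate n w)"

definition root_element :: "('a \<Rightarrow> 'a \<Rightarrow> bool) \<Rightarrow> 'a letter list \<Rightarrow> bool" where
  "root_element E w = (\<not> (\<exists>h n. n \<ge> 2 \<and> pc_eq E w (word_pow h n)))"

definition in_centraliser :: "('a \<Rightarrow> 'a \<Rightarrow> bool) \<Rightarrow> 'a letter list \<Rightarrow> 'a letter list \<Rightarrow> bool" where
  "in_centraliser E g v = pc_eq E (g @ v) (v @ g)"

end

theory Submission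
  imports Defs
begin

text \<open>Two words over a commutation graph represent the same element iff, after free
  reduction, their projections onto every pair of non-commuting generators coincide; a
  left-to-right reduction that cancels a new letter against the last occurrence of its
  inverse (when everything in between commutes with it) computes a geodesic normal form.

  If \<open>w\<close> commutes with a cyclically minimal root block \<open>v\<close>, then for some \<open>n\<close> the
  normal form \<open>R\<close> of \<open>w v\<^sup>n\<close> commutes with that of \<open>v\<close> letter by letter. Then on each pair
  of non-commuting generators \<open>R\<close> and \<open>v\<close> are powers of a common word, so generator counts
  of \<open>R\<close> and \<open>v\<close> are proportional along every edge of \<open>\<Phi>(\<alpha>(v))\<close>, hence with a global
  ratio \<open>M/N\<close> by connectivity. The part \<open>p\<close> of \<open>R\<close> on \<open>\<alpha>(v)\<close> satisfies \<open>p\<^sup>N = v\<^sup>M\<close>, and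
  Bezout produces an \<open>N\<close>-th root of \<open>v\<close>, so \<open>N = 1\<close>: \<open>w = v\<^sup>k z\<close> with \<open>z\<close> in the link of
  \<open>\<alpha>(v)\<close>.

  Applied to \<open>u\<close>, connectivity of \<open>\<Phi>(\<alpha>(u))\<close> leaves two cases. If \<open>\<alpha>(u)\<close> lies in the link
  of \<open>\<alpha>(v)\<close>, so does the geodesic word \<open>g\<^sup>-\<^sup>1 u g\<close> (its image on \<open>\<alpha>(v)\<close> is trivial), hence
  so does \<open>g\<close>. If \<open>u = v\<^sup>\<plusminus>\<^sup>1\<close>, then \<open>u\<^sup>g = v\<^sup>\<plusminus>\<^sup>k\<close>, the root property gives \<open>k = 1\<close>, and
  comparing lengths yields \<open>l(g) = 0\<close>.\<close>

abbreviation gens :: "'a letter list \<Rightarrow> 'a set" where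
  "gens w \<equiv> fst ` set w"

lemma inv_letter_inv[simp]: "inv_letter (inv_letter l) = l"
  by (simp add: inv_letter_def)
lemma fst_inv_letter[simp]: "fst (inv_letter l) = fst l"
  by (simp add: inv_letter_def)
lemma inv_letter_neq[simp]: "inv_letter l \<noteq> l" "l \<noteq> inv_letter l"
  by (cases l; simp add: inv_letter_def)+
lemma inv_word_Nil[simp]: "inv_word [] = []" by (simp add: inv_word_def)
lemma inv_word_Cons[simp]: "inv_word (l # w) = inv_word w @ [inv_letter l]" by (simp add: inv_word_def)
lemma inv_word_append[simp]: "inv_word (a @ b) = inv_word b @ inv_word a" by (simp add: inv_word_def)
lemma inv_word_inv[simp]: "inv_word (inv_word w) = w" by (induct w) auto
lemma length_inv_word[simp]: "length (inv_word w) = length w" by (simp add: inv_word_def)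
lemma gens_inv_word[simp]: "gens (inv_word w) = gens w"
  by (induct w) auto

lemma pc_eq_refl[simp]: "pc_eq E w w" by (simp add: pc_eq_def)
lemma pc_eq_sym: "pc_eq E a b \<Longrightarrow> pc_eq E b a"
  unfolding pc_eq_def
proof (induct rule: rtranclp_induct)
  case base then show ?case by simp
next
  case (step y z)
  then have "(sup (pc_step E) (pc_step E)\<inverse>\<inverse>) z y" by auto
  then show ?case using step(3) by (meson converse_rtranclp_into_rtranclp)
qed
lemma pc_eq_trans[trans]: "pc_eq E a b \<Longrightarrow> pc_eq E b c \<Longrightarrow> pc_eq E a c"
  unfolding pc_eq_def by auto
lemma pc_step_imp_pc_eq: "pc_step E a b \<Longrightarrow> pc_eq E a b"
  unfolding pc_eq_def by auto

lemma pc_eq_map: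
  assumes step: "\<And>a b. pc_step E a b \<Longrightarrow> f a = f b \<or> pc_step E (f a) (f b)"
    and eq: "pc_eq E a b"
  shows "pc_eq E (f a) (f b)"
  using eq unfolding pc_eq_def
proof (induct rule: rtranclp_induct)
  case (step y z)
  then have "f y = f z \<or> (sup (pc_step E) (pc_step E)\<inverse>\<inverse>) (f y) (f z)" using assms(1) by fastforce
  then show ?case using step(3) by (metis rtranclp.rtrancl_into_rtrancl)
qed simp

lemma pc_step_context: "pc_step E a b \<Longrightarrow> pc_step E (p @ a @ q) (p @ b @ q)"
proof (induct rule: pc_step.cases)
  case (cancel xs x b ys)
  then show ?case using pc_step.cancel[of E "p @ xs" x b "ys @ q"] by simp
next
  case (commute x y xs b c ys)
  then show ?case using pc_step.commute[of E x y "p @ xs" b c "ys @ q"] by simp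
qed

lemma pc_eq_context: "pc_eq E a b \<Longrightarrow> pc_eq E (p @ a @ q) (p @ b @ q)"
  using pc_eq_map[of E "\<lambda>w. p @ w @ q"] pc_step_context by blast

lemma pc_eq_append: "pc_eq E a a' \<Longrightarrow> pc_eq E b b' \<Longrightarrow> pc_eq E (a @ b) (a' @ b')"
  using pc_eq_context[of E a a' "[]" b] pc_eq_context[of E b b' a' "[]"] pc_eq_trans by fastforce

lemma pc_eq_append_left: "pc_eq E b b' \<Longrightarrow> pc_eq E (a @ b) (a @ b')"
  by (simp add: pc_eq_append)
lemma pc_eq_append_right: "pc_eq E a a' \<Longrightarrow> pc_eq E (a @ b) (a' @ b)"
  by (simp add: pc_eq_append)

lemma pc_eq_inverse_pair: "pc_eq E [l, inv_letter l] []"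
proof -
  obtain x b where l: "l = (x, b)" by fastforce
  have "pc_step E ([] @ [(x, b), (x, \<not> b)] @ []) ([] @ [])" by (rule pc_step.cancel)
  then show ?thesis using l by (simp add: inv_letter_def pc_step_imp_pc_eq)
qed

lemma pc_eq_right_inverse: "pc_eq E (w @ inv_word w) []"
proof (induct w)
  case Nil then show ?case by simp
next
  case (Cons l w)
  have "pc_eq E ([l] @ (w @ inv_word w) @ [inv_letter l]) ([l] @ [] @ [inv_letter l])"
    using pc_eq_context[OF Cons] by blast
  then have "pc_eq E ((l # w) @ inv_word (l # w)) [l, inv_letter l]" by simp
  then show ?case using pc_eq_inverse_pair pc_eq_trans by blast
qed

lemma pc_eq_left_inverse: "pc_eq E (inv_word w @ w) []"
  using pc_eq_right_inverse[of E "inv_word w"] by simp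

locale pc_graph =
  fixes E :: "'a \<Rightarrow> 'a \<Rightarrow> bool"
  assumes sym_E: "symp E" and irrefl_E: "irreflp E"
begin

lemma E_sym: "E x y \<Longrightarrow> E y x" using sym_E by (meson sympD)
lemma E_irrefl[simp]: "\<not> E x x" using irrefl_E by (meson irreflpD)

lemma pc_step_swap: "E (fst l1) (fst l2) \<Longrightarrow> pc_step E (xs @ [l1, l2] @ ys) (xs @ [l2, l1] @ ys)"
  using pc_step.commute[of E "fst l1" "fst l2" xs "snd l1" "snd l2" ys] by simp

lemma pc_eq_swap: "E (fst l1) (fst l2) \<Longrightarrow> pc_eq E (xs @ [l1, l2] @ ys) (xs @ [l2, l1] @ ys)"
  by (rule pc_step_imp_pc_eq, rule pc_step_swap)

lemma pc_step_inv_word: "pc_step E a b \<Longrightarrow> pc_step E (inv_word a) (inv_word b)"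
proof (induct rule: pc_step.cases)
  case (cancel xs x b ys)
  then show ?case using pc_step.cancel[of E "inv_word ys" x b "inv_word xs"]
    by (simp add: inv_letter_def)
next
  case (commute x y xs b c ys)
  then show ?case using pc_step.commute[of E y x "inv_word ys" "\<not> c" "\<not> b" "inv_word xs"] E_sym
    by (simp add: inv_letter_def)
qed

lemma pc_eq_inv_word: "pc_eq E a b \<Longrightarrow> pc_eq E (inv_word a) (inv_word b)"
  using pc_eq_map[of E inv_word] pc_step_inv_word by blast

lemma pc_eq_move_right: "(\<forall>m\<in>set t. E (fst c) (fst m)) \<Longrightarrow> pc_eq E (c # t) (t @ [c])"
proof (induct t)
  case Nil then show ?case by simp
next
  case (Cons m t)
  have "pc_eq E (c # m # t) (m # c # t)" using pc_eq_swap[of c m "[]" t] Cons(2) by simp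
  also have "pc_eq E \<dots> (m # t @ [c])" using pc_eq_append_left[OF Cons(1), of "[m]"] Cons(2) by simp
  finally show ?case by simp
qed

end

definition pair_proj :: "'a \<Rightarrow> 'a \<Rightarrow> 'a letter list \<Rightarrow> 'a letter list" where
  "pair_proj x y w = filter (\<lambda>l. fst l = x \<or> fst l = y) w"

definition proj_eq :: "('a \<Rightarrow> 'a \<Rightarrow> bool) \<Rightarrow> 'a letter list \<Rightarrow> 'a letter list \<Rightarrow> bool" where
  "proj_eq E w w' = (\<forall>x y. \<not> E x y \<longrightarrow> pair_proj x y w = pair_proj x y w')"

definition cancels :: "('a \<Rightarrow> 'a \<Rightarrow> bool) \<Rightarrow> 'a letter list \<Rightarrow> 'a letter \<Rightarrow> bool" where
  "cancels E r a = (\<exists>xs ys. r = xs @ inv_letter a # ys \<and> (\<forall>m\<in>set ys. E (fst a) (fst m)))"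

fun drop_inverse :: "('a \<Rightarrow> 'a \<Rightarrow> bool) \<Rightarrow> 'a letter \<Rightarrow> 'a letter list \<Rightarrow> 'a letter list option" where
  "drop_inverse E a [] = None"
| "drop_inverse E a (l # r) = (case drop_inverse E a r of Some r' \<Rightarrow> Some (l # r')
     | None \<Rightarrow> (if l = inv_letter a \<and> (\<forall>m\<in>set r. E (fst a) (fst m)) then Some r else None))"

definition reduce_snoc :: "('a \<Rightarrow> 'a \<Rightarrow> bool) \<Rightarrow> 'a letter list \<Rightarrow> 'a letter \<Rightarrow> 'a letter list" where
  "reduce_snoc E r a = (case drop_inverse E a r of Some r' \<Rightarrow> r' | None \<Rightarrow> r @ [a])"

definition pc_nf :: "('a \<Rightarrow> 'a \<Rightarrow> bool) \<Rightarrow> 'a letter list \<Rightarrow> 'a letter list" where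
  "pc_nf E w = foldl (reduce_snoc E) [] w"

definition nc_filter :: "('a \<Rightarrow> 'a \<Rightarrow> bool) \<Rightarrow> 'a \<Rightarrow> 'a letter list \<Rightarrow> 'a letter list" where
  "nc_filter E x w = filter (\<lambda>l. \<not> E x (fst l)) w"

fun no_inverse_pair :: "'a \<Rightarrow> 'a letter list \<Rightarrow> bool" where
  "no_inverse_pair x (l1 # l2 # s) = (\<not> (fst l1 = x \<and> l2 = inv_letter l1) \<and> no_inverse_pair x (l2 # s))"
| "no_inverse_pair x _ = True"

text \<open>No letter on \<open>x\<close> is followed by its inverse with only generators commuting with \<open>x\<close>
  in between; these are exactly the words admitting no cancellation.\<close>
definition pc_reduced :: "('a \<Rightarrow> 'a \<Rightarrow> bool) \<Rightarrow> 'a letter list \<Rightarrow> bool" where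
  "pc_reduced E r = (\<forall>x. no_inverse_pair x (nc_filter E x r))"

lemma pair_proj_append[simp]: "pair_proj x y (a @ b) = pair_proj x y a @ pair_proj x y b"
  by (simp add: pair_proj_def)
lemma pair_proj_Cons:
  "pair_proj x y (l # b) = (if fst l = x \<or> fst l = y then l # pair_proj x y b else pair_proj x y b)"
  by (simp add: pair_proj_def)
lemma pair_proj_Nil[simp]: "pair_proj x y [] = []" by (simp add: pair_proj_def)
lemma nc_filter_append[simp]: "nc_filter E x (a @ b) = nc_filter E x a @ nc_filter E x b"
  by (simp add: nc_filter_def)
lemma nc_filter_Cons: "nc_filter E x (l # b) =
    (if \<not> E x (fst l) then l # nc_filter E x b else nc_filter E x b)"
  by (simp add: nc_filter_def)
lemma nc_filter_Nil[simp]: "nc_filter E x [] = []" by (simp add: nc_filter_def)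

lemma proj_eq_refl[simp]: "proj_eq E w w" by (simp add: proj_eq_def)
lemma proj_eq_sym: "proj_eq E a b \<Longrightarrow> proj_eq E b a" by (simp add: proj_eq_def)
lemma proj_eq_trans: "proj_eq E a b \<Longrightarrow> proj_eq E b c \<Longrightarrow> proj_eq E a c" by (simp add: proj_eq_def)

lemma drop_inverse_Some: "drop_inverse E a r = Some r' \<Longrightarrow>
   \<exists>xs ys. r = xs @ inv_letter a # ys \<and> r' = xs @ ys \<and> (\<forall>m\<in>set ys. E (fst a) (fst m))"
proof (induct r arbitrary: r')
  case Nil then show ?case by simp
next
  case (Cons l r)
  show ?case
  proof (cases "drop_inverse E a r")
    case None
    then show ?thesis using Cons(2) by (auto split: if_splits intro: exI[of _ "[]"])
  next
    case (Some r1)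
    then obtain xs ys where "r = xs @ inv_letter a # ys" "r1 = xs @ ys" "\<forall>m\<in>set ys. E (fst a) (fst m)"
      using Cons(1) by blast
    moreover have "r' = l # r1" using Cons(2) Some by simp
    ultimately show ?thesis by (intro exI[of _ "l # xs"] exI[of _ ys]) simp
  qed
qed

lemma drop_inverse_None: "drop_inverse E a r = None \<Longrightarrow> r = xs @ inv_letter a # ys \<Longrightarrow>
    \<exists>m\<in>set ys. \<not> E (fst a) (fst m)"
proof (induct r arbitrary: xs)
  case Nil then show ?case by simp
next
  case (Cons l r)
  show ?case
  proof (cases xs)
    case Nil
    then show ?thesis using Cons(2,3) by (auto split: option.splits if_splits)
  next
    case (Cons l' xs')
    then show ?thesis using Cons.hyps Cons.prems by (auto split: option.splits if_splits)
  qed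
qed

lemma drop_inverse_None_iff: "drop_inverse E a r = None \<longleftrightarrow> \<not> cancels E r a"
  unfolding cancels_def using drop_inverse_None drop_inverse_Some by (metis option.exhaust)

lemma reduce_snoc_cancels: "cancels E r a \<Longrightarrow>
    \<exists>xs ys. r = xs @ inv_letter a # ys \<and> reduce_snoc E r a = xs @ ys \<and> (\<forall>m\<in>set ys. E (fst a) (fst m))"
  using drop_inverse_None_iff[of E a r] drop_inverse_Some[of E a r] unfolding reduce_snoc_def
    by (auto split: option.splits)

lemma reduce_snoc_no_cancel: "\<not> cancels E r a \<Longrightarrow> reduce_snoc E r a = r @ [a]"
  using drop_inverse_None_iff[of E a r] unfolding reduce_snoc_def by auto

lemma filter_eq_snoc: "filter P r = s @ [l] \<Longrightarrow> \<exists>xs ys. r = xs @ l # ys \<and> P l \<and> filter P ys = []"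
proof -
  assume h: "filter P r = s @ [l]"
  then have "filter P (rev r) = l # rev s" by (simp add: rev_filter[symmetric])
  then obtain us vs where "rev r = us @ l # vs" "\<forall>u\<in>set us. \<not> P u" "P l"
    by (auto simp: filter_eq_Cons_iff)
  then have "r = rev vs @ l # rev us" "filter P (rev us) = []"
    by (auto simp: filter_empty_conv)
      (metis rev_append rev_rev_ident rev.simps(2) append_assoc append_Cons append_Nil)
  then show ?thesis using \<open>P l\<close> by blast
qed

lemma no_inverse_pair_append: "no_inverse_pair x (s @ t) \<longleftrightarrow> no_inverse_pair x s \<and> no_inverse_pair x t \<and>
   \<not> (s \<noteq> [] \<and> t \<noteq> [] \<and> fst (last s) = x \<and> hd t = inv_letter (last s))"
proof (induct s)
  case Nil then show ?case by simp
next
  case (Cons l s) then show ?case by (cases s; cases t) auto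
qed

lemma no_inverse_pair_split: "no_inverse_pair x (A @ c # B) \<Longrightarrow> no_inverse_pair x A \<and> no_inverse_pair x B"
proof -
  assume h: "no_inverse_pair x (A @ c # B)"
  then have "no_inverse_pair x A" "no_inverse_pair x ([c] @ B)" using no_inverse_pair_append[of x A "c # B"]
    by auto
  then show ?thesis using no_inverse_pair_append[of x "[c]" B] by auto
qed

context pc_graph
begin

lemma pair_proj_commuting_Nil: "\<forall>m\<in>set ys. E x (fst m) \<Longrightarrow> \<not> E p q \<Longrightarrow> x = p \<or> x = q \<Longrightarrow> pair_proj p q ys = []"
  unfolding pair_proj_def filter_empty_conv
proof (intro ballI notI)
  fix m assume h: "\<forall>m\<in>set ys. E x (fst m)" "\<not> E p q" "x = p \<or> x = q" "m \<in> set ys" "fst m = p \<or> fst m = q"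
  then have "E x (fst m)" by blast
  then show False using h(2,3,5) E_sym by auto
qed

lemma cancels_if_pair_proj_last:
  assumes h: "\<forall>y. \<not> E (fst a) y \<longrightarrow>
    pair_proj (fst a) y r \<noteq> [] \<and> last (pair_proj (fst a) y r) = inv_letter a"
  shows "cancels E r a"
proof -
  let ?x = "fst a"
  have "pair_proj ?x ?x r \<noteq> []" "last (pair_proj ?x ?x r) = inv_letter a" using h by auto
  then have "pair_proj ?x ?x r = butlast (pair_proj ?x ?x r) @ [inv_letter a]"
    by (metis append_butlast_last_id)
  then obtain xs ys where r: "r = xs @ inv_letter a # ys" and ys0: "pair_proj ?x ?x ys = []"
    unfolding pair_proj_def using filter_eq_snoc by (metis (no_types, lifting))
  have "\<forall>m\<in>set ys. E ?x (fst m)"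
  proof
    fix m assume m: "m \<in> set ys"
    show "E ?x (fst m)"
    proof (rule ccontr)
      assume ne: "\<not> E ?x (fst m)"
      have mx: "fst m \<noteq> ?x" using ys0 m unfolding pair_proj_def by (auto simp: filter_empty_conv)
      have pne: "pair_proj ?x (fst m) ys \<noteq> []" using m unfolding pair_proj_def
        by (auto simp: filter_empty_conv)
      have "last (pair_proj ?x (fst m) r) = last (pair_proj ?x (fst m) ys)" using r pne
        by (simp add: pair_proj_Cons last_append)
      moreover have "last (pair_proj ?x (fst m) ys) \<in> set (pair_proj ?x (fst m) ys)" using pne
        by (rule last_in_set)
      then have "last (pair_proj ?x (fst m) ys) \<in> set ys"
        "fst (last (pair_proj ?x (fst m) ys)) = ?x \<or> fst (last (pair_proj ?x (fst m) ys)) = fst m"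
        unfolding pair_proj_def by auto
      moreover have "\<forall>l\<in>set ys. fst l \<noteq> ?x" using ys0 unfolding pair_proj_def
        by (auto simp: filter_empty_conv)
      ultimately show False using h ne mx by (metis fst_inv_letter)
    qed
  qed
  then show ?thesis unfolding cancels_def using r by blast
qed

lemma cancels_iff_pair_proj: "cancels E r a \<longleftrightarrow> (\<forall>y. \<not> E (fst a) y \<longrightarrow> pair_proj (fst a) y r \<noteq> [] \<and>
    last (pair_proj (fst a) y r) = inv_letter a)"
proof
  assume "cancels E r a"
  then obtain xs ys where r: "r = xs @ inv_letter a # ys" and ys: "\<forall>m\<in>set ys. E (fst a) (fst m)"
    unfolding cancels_def by blast
  show "\<forall>y. \<not> E (fst a) y \<longrightarrow> pair_proj (fst a) y r \<noteq> [] \<and> last (pair_proj (fst a) y r) = inv_letter a"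
  proof (intro allI impI)
    fix y assume y: "\<not> E (fst a) y"
    have "pair_proj (fst a) y ys = []" unfolding pair_proj_def using ys y
      by (auto simp: filter_empty_conv)
    then show "pair_proj (fst a) y r \<noteq> [] \<and> last (pair_proj (fst a) y r) = inv_letter a"
      using r by (simp add: pair_proj_Cons)
  qed
qed (rule cancels_if_pair_proj_last)

lemma cancels_if_nc_filter_last: "nc_filter E (fst a) r \<noteq> [] \<Longrightarrow> last (nc_filter E (fst a) r) = inv_letter a \<Longrightarrow>
    cancels E r a"
proof -
  assume "nc_filter E (fst a) r \<noteq> []" "last (nc_filter E (fst a) r) = inv_letter a"
  then have "nc_filter E (fst a) r = butlast (nc_filter E (fst a) r) @ [inv_letter a]"
    by (metis append_butlast_last_id)
  then obtain xs ys where "r = xs @ inv_letter a # ys" "filter (\<lambda>l. \<not> E (fst a) (fst l)) ys = []"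
    unfolding nc_filter_def using filter_eq_snoc by (metis (no_types, lifting))
  then show ?thesis unfolding cancels_def by (auto simp: filter_empty_conv)
qed

lemma pair_proj_reduce_snoc: "\<not> E p q \<Longrightarrow> pair_proj p q (reduce_snoc E r a) =
  (if cancels E r a then (if fst a = p \<or> fst a = q then butlast (pair_proj p q r) else pair_proj p q r)
   else pair_proj p q r @ (if fst a = p \<or> fst a = q then [a] else []))"
proof (cases "cancels E r a")
  case True
  assume pq: "\<not> E p q"
  obtain xs ys where r: "r = xs @ inv_letter a # ys" and rr: "reduce_snoc E r a = xs @ ys"
     and ys: "\<forall>m\<in>set ys. E (fst a) (fst m)" using reduce_snoc_cancels[OF True] by blast
  show ?thesis
  proof (cases "fst a = p \<or> fst a = q")
    case True
    have "pair_proj p q ys = []" using ys pq True by (intro pair_proj_commuting_Nil[of _ "fst a"]) auto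
    then show ?thesis using True \<open>cancels E r a\<close> r rr by (auto simp: pair_proj_Cons)
  next
    case False
    then show ?thesis using \<open>cancels E r a\<close> r rr by (auto simp: pair_proj_Cons)
  qed
next
  case False
  then show ?thesis by (simp add: reduce_snoc_no_cancel pair_proj_Cons pair_proj_def)
qed

lemma proj_eq_cancels: "proj_eq E r r' \<Longrightarrow> cancels E r a = cancels E r' a"
  unfolding cancels_iff_pair_proj proj_eq_def by auto

lemma proj_eq_reduce_snoc: "proj_eq E r r' \<Longrightarrow> proj_eq E (reduce_snoc E r a) (reduce_snoc E r' a)"
  using proj_eq_cancels[of r r' a] unfolding proj_eq_def by (simp add: pair_proj_reduce_snoc)

lemma proj_eq_foldl_reduce: "proj_eq E r r' \<Longrightarrow>
    proj_eq E (foldl (reduce_snoc E) r w) (foldl (reduce_snoc E) r' w)"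
  by (induct w arbitrary: r r') (auto simp: proj_eq_reduce_snoc)

lemma cancels_reduce_snoc_commuting: "E (fst a) (fst b) \<Longrightarrow> cancels E (reduce_snoc E r a) b = cancels E r b"
  unfolding cancels_iff_pair_proj using E_sym by (auto simp: pair_proj_reduce_snoc)

lemma reduce_snoc_commute: "E (fst a) (fst b) \<Longrightarrow>
    proj_eq E (reduce_snoc E (reduce_snoc E r a) b) (reduce_snoc E (reduce_snoc E r b) a)"
proof -
  assume ab: "E (fst a) (fst b)"
  then have ba: "E (fst b) (fst a)" by (rule E_sym)
  show ?thesis unfolding proj_eq_def
  proof (intro allI impI)
    fix p q assume pq: "\<not> E p q"
    then have "\<not> ((fst a = p \<or> fst a = q) \<and> (fst b = p \<or> fst b = q))" using ab ba E_sym by auto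
    then show "pair_proj p q (reduce_snoc E (reduce_snoc E r a) b) =
        pair_proj p q (reduce_snoc E (reduce_snoc E r b) a)"
      using pq cancels_reduce_snoc_commuting[OF ab, of r] cancels_reduce_snoc_commuting[OF ba, of r]
      by (auto simp: pair_proj_reduce_snoc)
  qed
qed

lemma cancels_snoc_inverse: "cancels E (r @ [inv_letter a]) a"
  unfolding cancels_def by (rule exI[of _ r], rule exI[of _ "[]"]) simp

lemma proj_eq_move_letter_right:
  assumes "\<forall>m\<in>set ys. E (fst c) (fst m)"
  shows "proj_eq E (xs @ c # ys) (xs @ ys @ [c])"
  unfolding proj_eq_def
proof (intro allI impI)
  fix p q assume pq: "\<not> E p q"
  show "pair_proj p q (xs @ c # ys) = pair_proj p q (xs @ ys @ [c])"
  proof (cases "fst c = p \<or> fst c = q")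
    case True
    have "pair_proj p q ys = []" using assms pq True by (intro pair_proj_commuting_Nil[of _ "fst c"]) auto
    then show ?thesis using True by (auto simp: pair_proj_Cons)
  next
    case False then show ?thesis by (auto simp: pair_proj_Cons)
  qed
qed

lemma not_cancels_after_cancel:
  assumes red: "pc_reduced E (xs @ inv_letter a # ys)" and ys: "\<forall>m\<in>set ys. E (fst a) (fst m)"
  shows "\<not> cancels E (xs @ ys) (inv_letter a)"
proof
  assume "cancels E (xs @ ys) (inv_letter a)"
  then obtain xs' ys' where e: "xs @ ys = xs' @ a # ys'" and ys': "\<forall>m\<in>set ys'. E (fst a) (fst m)"
    unfolding cancels_def by auto
  have sys: "nc_filter E (fst a) ys = []" using ys unfolding nc_filter_def by (auto simp: filter_empty_conv)
  have "nc_filter E (fst a) ys' = []" using ys' unfolding nc_filter_def by (auto simp: filter_empty_conv)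
  then have "nc_filter E (fst a) xs = nc_filter E (fst a) xs' @ [a]"
    using arg_cong[OF e, of "nc_filter E (fst a)"] sys by (simp add: nc_filter_Cons)
  then have "nc_filter E (fst a) (xs @ inv_letter a # ys) = nc_filter E (fst a) xs' @ [a, inv_letter a]"
    using sys by (simp add: nc_filter_Cons)
  then have "\<not> no_inverse_pair (fst a) (nc_filter E (fst a) (xs @ inv_letter a # ys))"
    by (simp add: no_inverse_pair_append)
  then show False using red unfolding pc_reduced_def by blast
qed

lemma reduce_snoc_inverse: "pc_reduced E r \<Longrightarrow> proj_eq E (reduce_snoc E (reduce_snoc E r a) (inv_letter a)) r"
proof (cases "cancels E r a")
  case False
  then have "reduce_snoc E r a = r @ [a]" by (rule reduce_snoc_no_cancel)
  moreover have c: "cancels E (r @ [a]) (inv_letter a)" using cancels_snoc_inverse[of r "inv_letter a"]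
    by simp
  ultimately show ?thesis unfolding proj_eq_def
  proof (intro allI impI)
    fix p q assume pq: "\<not> E p q"
    show "pair_proj p q (reduce_snoc E (reduce_snoc E r a) (inv_letter a)) = pair_proj p q r"
      using \<open>reduce_snoc E r a = r @ [a]\<close> c by (simp add: pair_proj_reduce_snoc[OF pq] pair_proj_Cons)
  qed
next
  case True
  assume red: "pc_reduced E r"
  obtain xs ys where r: "r = xs @ inv_letter a # ys" and rr: "reduce_snoc E r a = xs @ ys"
     and ys: "\<forall>m\<in>set ys. E (fst a) (fst m)" using reduce_snoc_cancels[OF True] by blast
  have "reduce_snoc E (reduce_snoc E r a) (inv_letter a) = xs @ ys @ [inv_letter a]"
    using rr reduce_snoc_no_cancel[OF not_cancels_after_cancel[OF red[unfolded r] ys]] by simp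
  moreover have "proj_eq E r (xs @ ys @ [inv_letter a])"
    unfolding r using ys by (intro proj_eq_move_letter_right) simp
  ultimately show ?thesis using proj_eq_sym by simp
qed

lemma pc_reduced_Nil[simp]: "pc_reduced E []" by (simp add: pc_reduced_def)

lemma pc_reduced_delete_cancelled:
  assumes red: "pc_reduced E (xs @ inv_letter a # ys)" and ys: "\<forall>m\<in>set ys. E (fst a) (fst m)"
  shows "pc_reduced E (xs @ ys)"
  unfolding pc_reduced_def
proof
  fix x
  have n: "no_inverse_pair x (nc_filter E x (xs @ inv_letter a # ys))"
    using red unfolding pc_reduced_def by blast
  show "no_inverse_pair x (nc_filter E x (xs @ ys))"
  proof (cases "E x (fst a)")
    case True
    then show ?thesis using n by (simp add: nc_filter_Cons)
  next
    case xa: False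
    show ?thesis
    proof (cases "x = fst a")
      case True
      have "nc_filter E x ys = []" using ys True unfolding nc_filter_def by (auto simp: filter_empty_conv)
      then show ?thesis using n True by (simp add: nc_filter_Cons no_inverse_pair_append)
    next
      case False
      have nx: "\<forall>m\<in>set (nc_filter E x ys). fst m \<noteq> x"
        using ys xa E_sym unfolding nc_filter_def by fastforce
      have "nc_filter E x (xs @ inv_letter a # ys) = nc_filter E x xs @ [inv_letter a] @ nc_filter E x ys"
        using xa by (simp add: nc_filter_Cons)
      then have "no_inverse_pair x (nc_filter E x xs)" "no_inverse_pair x (nc_filter E x ys)"
        using n no_inverse_pair_split[of x "nc_filter E x xs" "inv_letter a" "nc_filter E x ys"] by simp_all
      moreover have "nc_filter E x ys \<noteq> [] \<Longrightarrow> fst (hd (nc_filter E x ys)) \<noteq> x"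
        using nx hd_in_set by blast
      ultimately show ?thesis by (auto simp: no_inverse_pair_append)
    qed
  qed
qed

lemma pc_reduced_snoc:
  assumes red: "pc_reduced E r" and nc: "\<not> cancels E r a"
  shows "pc_reduced E (r @ [a])"
  unfolding pc_reduced_def
proof
  fix x
  have n: "no_inverse_pair x (nc_filter E x r)" using red unfolding pc_reduced_def by blast
  show "no_inverse_pair x (nc_filter E x (r @ [a]))"
  proof (cases "E x (fst a)")
    case True then show ?thesis using n by (simp add: nc_filter_Cons)
  next
    case False
    have "\<not> (nc_filter E x r \<noteq> [] \<and> fst (last (nc_filter E x r)) = x \<and>
        a = inv_letter (last (nc_filter E x r)))"
      using cancels_if_nc_filter_last nc by (metis fst_inv_letter inv_letter_inv)
    then show ?thesis using n False by (simp add: nc_filter_Cons no_inverse_pair_append)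
  qed
qed

lemma pc_reduced_reduce_snoc: "pc_reduced E r \<Longrightarrow> pc_reduced E (reduce_snoc E r a)"
proof (cases "cancels E r a")
  case True
  then show "pc_reduced E r \<Longrightarrow> ?thesis"
    using reduce_snoc_cancels pc_reduced_delete_cancelled by metis
qed (simp add: reduce_snoc_no_cancel pc_reduced_snoc)

lemma pc_reduced_foldl: "pc_reduced E r \<Longrightarrow> pc_reduced E (foldl (reduce_snoc E) r w)"
  by (induct w arbitrary: r) (auto simp: pc_reduced_reduce_snoc)

lemma pc_reduced_pc_nf: "pc_reduced E (pc_nf E w)"
  unfolding pc_nf_def by (rule pc_reduced_foldl) simp

lemma pc_eq_reduce_snoc: "pc_eq E (r @ [a]) (reduce_snoc E r a)"
proof (cases "cancels E r a")
  case True
  obtain xs ys where r: "r = xs @ inv_letter a # ys" and rr: "reduce_snoc E r a = xs @ ys"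
     and ys: "\<forall>m\<in>set ys. E (fst a) (fst m)" using reduce_snoc_cancels[OF True] by blast
  have "pc_eq E (r @ [a]) (xs @ (inv_letter a # ys) @ [a])" using r by simp
  also have "pc_eq E \<dots> (xs @ (ys @ [inv_letter a]) @ [a])"
    using pc_eq_move_right[of ys "inv_letter a"] ys by (intro pc_eq_append_left pc_eq_append_right) simp
  also have "pc_eq E \<dots> (xs @ ys @ [])"
    using pc_eq_context[OF pc_eq_inverse_pair[of E "inv_letter a"], of "xs @ ys" "[]"] by simp
  finally show ?thesis using rr by simp
next
  case False then show ?thesis by (simp add: reduce_snoc_no_cancel)
qed

lemma pc_eq_foldl_reduce: "pc_eq E (r @ w) (foldl (reduce_snoc E) r w)"
proof (induct w arbitrary: r)
  case Nil then show ?case by simp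
next
  case (Cons a w)
  have "pc_eq E (r @ a # w) (reduce_snoc E r a @ w)"
    using pc_eq_append_right[OF pc_eq_reduce_snoc[of r a], of w] by simp
  then show ?case using Cons[of "reduce_snoc E r a"] pc_eq_trans by simp
qed

lemma pc_eq_pc_nf: "pc_eq E w (pc_nf E w)"
  using pc_eq_foldl_reduce[of "[]" w] unfolding pc_nf_def by simp

lemma proj_eq_pc_nf_step: "pc_step E w w' \<Longrightarrow> proj_eq E (pc_nf E w) (pc_nf E w')"
proof (induct rule: pc_step.cases)
  case (cancel xs x b ys)
  have i: "(x, \<not> b) = inv_letter (x, b)" by (simp add: inv_letter_def)
  have "proj_eq E (reduce_snoc E (reduce_snoc E (pc_nf E xs) (x, b)) (x, \<not> b)) (pc_nf E xs)"
    unfolding i by (rule reduce_snoc_inverse[OF pc_reduced_pc_nf])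
  then show ?case using cancel by (simp add: pc_nf_def proj_eq_foldl_reduce)
next
  case (commute x y xs b c ys)
  have "proj_eq E (reduce_snoc E (reduce_snoc E (pc_nf E xs) (x, b)) (y, c))
      (reduce_snoc E (reduce_snoc E (pc_nf E xs) (y, c)) (x, b))"
    using reduce_snoc_commute[of "(x,b)" "(y,c)"] commute by simp
  then show ?case using commute by (simp add: pc_nf_def proj_eq_foldl_reduce)
qed

lemma proj_eq_pc_nf: "pc_eq E w w' \<Longrightarrow> proj_eq E (pc_nf E w) (pc_nf E w')"
  unfolding pc_eq_def
proof (induct rule: rtranclp_induct)
  case base then show ?case by simp
next
  case (step y z)
  then show ?case using proj_eq_pc_nf_step proj_eq_sym proj_eq_trans by blast
qed

lemma length_reduce_snoc: "length (reduce_snoc E r a) =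
    (if cancels E r a then length r - 1 else length r + 1)"
proof (cases "cancels E r a")
  case True then show ?thesis using reduce_snoc_cancels[OF True] by auto
qed (simp add: reduce_snoc_no_cancel)

lemma length_foldl_reduce: "length (foldl (reduce_snoc E) r w) \<le> length r + length w \<and>
   (length (foldl (reduce_snoc E) r w) = length r + length w \<longrightarrow> foldl (reduce_snoc E) r w = r @ w)"
proof (induct w arbitrary: r)
  case Nil then show ?case by simp
next
  case (Cons a w)
  show ?case
  proof (cases "cancels E r a")
    case True
    then have "length (reduce_snoc E r a) = length r - 1" "length r > 0"
      using reduce_snoc_cancels[OF True] length_reduce_snoc by auto
    then show ?thesis using Cons[of "reduce_snoc E r a"] by auto
  next
    case False
    then show ?thesis using Cons[of "r @ [a]"] by (simp add: reduce_snoc_no_cancel)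
  qed
qed

lemma length_pc_nf_le: "length (pc_nf E w) \<le> length w"
  using length_foldl_reduce[of "[]" w] unfolding pc_nf_def by simp

lemma pc_nf_eq_if_length_eq: "length (pc_nf E w) = length w \<Longrightarrow> pc_nf E w = w"
  using length_foldl_reduce[of "[]" w] unfolding pc_nf_def by simp

lemma proj_eq_Cons_split: "proj_eq E (a # s) r' \<Longrightarrow>
    \<exists>t t'. r' = t @ a # t' \<and> (\<forall>m\<in>set t. E (fst a) (fst m)) \<and> proj_eq E s (t @ t')"
proof -
  assume h: "proj_eq E (a # s) r'"
  let ?x = "fst a"
  have "pair_proj ?x ?x r' = a # pair_proj ?x ?x s" using h unfolding proj_eq_def
    by (metis E_irrefl pair_proj_Cons)
  then obtain t t' where r': "r' = t @ a # t'" and tx: "\<forall>u\<in>set t. fst u \<noteq> ?x"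
    unfolding pair_proj_def by (auto simp: filter_eq_Cons_iff)
  have tE: "\<forall>m\<in>set t. E ?x (fst m)"
  proof
    fix m assume m: "m \<in> set t"
    show "E ?x (fst m)"
    proof (rule ccontr)
      assume ne: "\<not> E ?x (fst m)"
      then have "pair_proj ?x (fst m) r' = pair_proj ?x (fst m) (a # s)" using h unfolding proj_eq_def by auto
      then have e: "pair_proj ?x (fst m) t @ a # pair_proj ?x (fst m) t' = a # pair_proj ?x (fst m) s"
        using r' by (simp add: pair_proj_Cons)
      have "pair_proj ?x (fst m) t \<noteq> []" using m unfolding pair_proj_def by (auto simp: filter_empty_conv)
      then have "hd (pair_proj ?x (fst m) t) = a" using e by (metis append_Cons list.sel(1) neq_Nil_conv)
      then have "a \<in> set (pair_proj ?x (fst m) t)" using \<open>pair_proj ?x (fst m) t \<noteq> []\<close> hd_in_set by metis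
      then have "a \<in> set t" unfolding pair_proj_def by simp
      then show False using tx by auto
    qed
  qed
  have "proj_eq E s (t @ t')" unfolding proj_eq_def
  proof (intro allI impI)
    fix p q assume pq: "\<not> E p q"
    have e: "pair_proj p q (a # s) = pair_proj p q (t @ a # t')" using h pq r' unfolding proj_eq_def by auto
    show "pair_proj p q s = pair_proj p q (t @ t')"
    proof (cases "fst a = p \<or> fst a = q")
      case True
      have "pair_proj p q t = []" using tE pq True by (intro pair_proj_commuting_Nil[of _ "fst a"]) auto
      then show ?thesis using e True by (simp add: pair_proj_Cons)
    next
      case False then show ?thesis using e by (simp add: pair_proj_Cons)
    qed
  qed
  then show ?thesis using r' tE by blast
qed

lemma proj_eq_Nil: "proj_eq E [] r' \<Longrightarrow> r' = []"
proof (cases r')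
  case (Cons l r0)
  moreover assume "proj_eq E [] r'"
  then have "pair_proj (fst l) (fst l) r' = []" unfolding proj_eq_def by (metis E_irrefl pair_proj_Nil)
  ultimately show ?thesis by (simp add: pair_proj_Cons)
qed

lemma proj_eq_imp_pc_eq: "proj_eq E r r' \<Longrightarrow> pc_eq E r r'"
proof (induct r arbitrary: r')
  case Nil
  then have "r' = []" by (rule proj_eq_Nil)
  then show ?case by simp
next
  case (Cons a s)
  obtain t t' where r': "r' = t @ a # t'" and tE: "\<forall>m\<in>set t. E (fst a) (fst m)" and s: "proj_eq E s (t @ t')"
    using proj_eq_Cons_split[OF Cons(2)] by blast
  have "pc_eq E (a # s) (a # t @ t')" using pc_eq_append_left[OF Cons(1)[OF s], of "[a]"] by simp
  also have "pc_eq E \<dots> ((t @ [a]) @ t')" using pc_eq_append_right[OF pc_eq_move_right[OF tE], of t'] by simp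
  finally show ?case using r' by simp
qed

lemma proj_eq_length: "proj_eq E r r' \<Longrightarrow> length r = length r'"
proof (induct r arbitrary: r')
  case Nil
  then have "r' = []" by (rule proj_eq_Nil)
  then show ?case by simp
next
  case (Cons a s)
  obtain t t' where r': "r' = t @ a # t'" and s: "proj_eq E s (t @ t')"
    using proj_eq_Cons_split[OF Cons(2)] by blast
  then show ?case using Cons(1)[OF s] by simp
qed

lemma proj_eq_gens: "proj_eq E r r' \<Longrightarrow> gens r = gens r'"
proof -
  assume h: "proj_eq E r r'"
  have A: "x \<in> gens w \<longleftrightarrow> pair_proj x x w \<noteq> []" for x and w :: "'a letter list"
    unfolding pair_proj_def by (auto simp: filter_empty_conv)
  have B: "pair_proj x x r = pair_proj x x r'" for x using h unfolding proj_eq_def by simp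
  show ?thesis
  proof (rule set_eqI)
    fix x show "x \<in> gens r \<longleftrightarrow> x \<in> gens r'" using A[of x r] A[of x r'] B[of x] by simp
  qed
qed

lemma length_pc_nf_minimal: "pc_eq E w w' \<Longrightarrow> length (pc_nf E w) \<le> length w'"
  using proj_eq_pc_nf proj_eq_length length_pc_nf_le by (metis)

lemma pc_len_eq_length_pc_nf: "pc_len E w = length (pc_nf E w)"
  unfolding pc_len_def
proof (rule Least_equality)
  show "\<exists>w'. pc_eq E w w' \<and> length w' = length (pc_nf E w)" using pc_eq_pc_nf by blast
next
  fix n assume "\<exists>w'. pc_eq E w w' \<and> length w' = n"
  then show "length (pc_nf E w) \<le> n" using length_pc_nf_minimal by blast
qed

lemma pc_len_le_length: "pc_eq E w w' \<Longrightarrow> pc_len E w \<le> length w'"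
  by (simp add: pc_len_eq_length_pc_nf length_pc_nf_minimal)

lemma pc_len_cong: "pc_eq E w w' \<Longrightarrow> pc_len E w = pc_len E w'"
  by (simp add: pc_len_eq_length_pc_nf proj_eq_pc_nf proj_eq_length)

lemma pc_nf_eq_if_geodesic: "pc_len E w = length w \<Longrightarrow> pc_nf E w = w"
  by (simp add: pc_len_eq_length_pc_nf pc_nf_eq_if_length_eq)

lemma pc_nf_idem: "pc_nf E (pc_nf E w) = pc_nf E w"
  using pc_eq_pc_nf pc_len_cong pc_nf_eq_if_geodesic pc_len_eq_length_pc_nf by metis

lemma geodesic_pc_eq_imp_proj_eq: "pc_len E r = length r \<Longrightarrow> pc_len E r' = length r' \<Longrightarrow> pc_eq E r r' \<Longrightarrow>
    proj_eq E r r'"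
  using pc_nf_eq_if_geodesic proj_eq_pc_nf by metis

lemma pc_len_inv_word: "pc_len E (inv_word w) = pc_len E w"
proof -
  have "pc_len E (inv_word w) \<le> pc_len E w" for w
    using pc_len_le_length[OF pc_eq_inv_word[OF pc_eq_pc_nf[of w]]] by (simp add: pc_len_eq_length_pc_nf)
  from this[of w] this[of "inv_word w"] show ?thesis by simp
qed

end

definition restrict_gens :: "'a set \<Rightarrow> 'a letter list \<Rightarrow> 'a letter list" where
  "restrict_gens Y w = filter (\<lambda>l. fst l \<in> Y) w"

lemma restrict_gens_append[simp]: "restrict_gens Y (a @ b) = restrict_gens Y a @ restrict_gens Y b"
  by (simp add: restrict_gens_def)
lemma restrict_gens_inv_word: "restrict_gens Y (inv_word w) = inv_word (restrict_gens Y w)"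
  by (induct w) (auto simp: restrict_gens_def)
lemma restrict_gens_id: "gens w \<subseteq> Y \<Longrightarrow> restrict_gens Y w = w"
  unfolding restrict_gens_def by (induct w) auto
lemma restrict_gens_Nil: "gens w \<inter> Y = {} \<Longrightarrow> restrict_gens Y w = []"
  unfolding restrict_gens_def by (induct w) auto
lemma length_restrict_gens: "length (restrict_gens Y w) \<le> length w" by (simp add: restrict_gens_def)
lemma restrict_gens_length_eq_imp_subset: "length (restrict_gens Y w) = length w \<Longrightarrow> gens w \<subseteq> Y"
  unfolding restrict_gens_def
  by (metis (mono_tags, lifting) filter_id_conv image_subsetI length_filter_less less_irrefl)

lemma word_pow_0[simp]: "word_pow w 0 = []" by (simp add: word_pow_def)
lemma word_pow_Suc: "word_pow w (Suc n) = w @ word_pow w n" by (simp add: word_pow_def)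
lemma word_pow_one[simp]: "word_pow w (Suc 0) = w" by (simp add: word_pow_def)
lemma word_pow_add: "word_pow w (m + n) = word_pow w m @ word_pow w n"
  by (simp add: word_pow_def replicate_add)
lemma word_pow_Suc_right: "word_pow w (Suc n) = word_pow w n @ w"
  using word_pow_add[of w n "Suc 0"] by simp
lemma word_pow_mult: "word_pow w (m * n) = word_pow (word_pow w m) n"
  by (induct n) (simp_all add: word_pow_Suc word_pow_add)
lemma word_pow_Nil[simp]: "word_pow [] n = []" by (simp add: word_pow_def)
lemma filter_word_pow: "filter P (word_pow w n) = word_pow (filter P w) n"
  by (induct n) (simp_all add: word_pow_Suc)
lemma pair_proj_word_pow: "pair_proj x y (word_pow w n) = word_pow (pair_proj x y w) n"
  by (simp add: pair_proj_def filter_word_pow)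
lemma length_word_pow: "length (word_pow w n) = n * length w"
  by (induct n) (simp_all add: word_pow_Suc)
lemma set_word_pow: "n > 0 \<Longrightarrow> set (word_pow w n) = set w"
proof (induct n)
  case (Suc n) then show ?case by (cases n) (auto simp: word_pow_Suc)
qed simp
lemma set_word_pow_sub: "set (word_pow w n) \<subseteq> set w"
  by (cases "n = 0") (auto simp: set_word_pow)

lemma pc_eq_word_pow: "pc_eq E a b \<Longrightarrow> pc_eq E (word_pow a n) (word_pow b n)"
  by (induct n) (simp_all add: word_pow_Suc pc_eq_append)

lemma pc_eq_word_pow_inverse: "pc_eq E (word_pow s k @ word_pow (inv_word s) k) []"
proof (induct k)
  case (Suc k)
  have "word_pow s (Suc k) @ word_pow (inv_word s) (Suc k) =
      word_pow s k @ (s @ inv_word s) @ word_pow (inv_word s) k"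
    by (simp only: word_pow_Suc_right[of s k] word_pow_Suc[of "inv_word s" k] append_assoc)
  also have "pc_eq E \<dots> (word_pow s k @ [] @ word_pow (inv_word s) k)"
    by (rule pc_eq_context, rule pc_eq_right_inverse)
  finally show ?case using Suc pc_eq_trans by simp
qed simp

lemma pc_eq_commute_word_pow: "pc_eq E (s @ t) (t @ s) \<Longrightarrow> pc_eq E (word_pow s n @ t) (t @ word_pow s n)"
proof (induct n)
  case (Suc n)
  have "pc_eq E (word_pow s (Suc n) @ t) (s @ (word_pow s n @ t))" by (simp add: word_pow_Suc)
  also have "pc_eq E \<dots> (s @ (t @ word_pow s n))" by (rule pc_eq_append_left, rule Suc(1)[OF Suc(2)])
  also have "pc_eq E \<dots> ((s @ t) @ word_pow s n)" by simp
  also have "pc_eq E \<dots> ((t @ s) @ word_pow s n)" by (rule pc_eq_append_right, rule Suc(2))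
  finally show ?case by (simp add: word_pow_Suc)
qed simp

lemma pc_eq_commute_inv_word: "pc_eq E (s @ t) (t @ s) \<Longrightarrow> pc_eq E (s @ inv_word t) (inv_word t @ s)"
proof -
  assume h: "pc_eq E (s @ t) (t @ s)"
  have "pc_eq E (s @ inv_word t) (inv_word t @ t @ s @ inv_word t)"
    using pc_eq_append_right[OF pc_eq_sym[OF pc_eq_left_inverse[of E t]], of "s @ inv_word t"] by simp
  also have "pc_eq E \<dots> (inv_word t @ (s @ t) @ inv_word t)"
    using pc_eq_context[OF pc_eq_sym[OF h], of "inv_word t" "inv_word t"] by simp
  also have "pc_eq E \<dots> (inv_word t @ s @ [])"
    using pc_eq_context[OF pc_eq_right_inverse[of E t], of "inv_word t @ s" "[]"] by simp
  finally show ?thesis by simp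
qed

lemma pc_eq_commute_word_pows: "pc_eq E (s @ t) (t @ s) \<Longrightarrow>
    pc_eq E (word_pow s m @ word_pow t n) (word_pow t n @ word_pow s m)"
proof -
  assume h: "pc_eq E (s @ t) (t @ s)"
  have "pc_eq E (t @ word_pow s m) (word_pow s m @ t)" using pc_eq_sym[OF pc_eq_commute_word_pow[OF h]] .
  then have "pc_eq E (word_pow t n @ word_pow s m) (word_pow s m @ word_pow t n)"
    by (rule pc_eq_commute_word_pow)
  then show ?thesis by (rule pc_eq_sym)
qed

lemma pc_eq_word_pow_append: "pc_eq E (s @ t) (t @ s) \<Longrightarrow>
    pc_eq E (word_pow (s @ t) n) (word_pow s n @ word_pow t n)"
proof (induct n)
  case (Suc n)
  have "pc_eq E (word_pow (s @ t) (Suc n)) (s @ t @ word_pow s n @ word_pow t n)"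
    using pc_eq_append_left[OF Suc(1)[OF Suc(2)], of "s @ t"] by (simp add: word_pow_Suc)
  also have "pc_eq E \<dots> (s @ (word_pow s n @ t) @ word_pow t n)"
    using pc_eq_context[OF pc_eq_sym[OF pc_eq_commute_word_pow[OF Suc(2), of n]], of s "word_pow t n"] by simp
  finally show ?case by (simp add: word_pow_Suc)
qed simp

lemma pc_eq_word_pow_conj: "pc_eq E (word_pow (inv_word g @ s @ g) n) (inv_word g @ word_pow s n @ g)"
proof (induct n)
  case 0 then show ?case using pc_eq_sym[OF pc_eq_left_inverse[of E g]] by simp
next
  case (Suc n)
  have "pc_eq E (word_pow (inv_word g @ s @ g) (Suc n))
      ((inv_word g @ s) @ (g @ inv_word g) @ word_pow s n @ g)"
    using pc_eq_append_left[OF Suc, of "inv_word g @ s @ g"] by (simp add: word_pow_Suc)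
  also have "pc_eq E \<dots> ((inv_word g @ s) @ [] @ word_pow s n @ g)"
    by (rule pc_eq_context, rule pc_eq_right_inverse)
  finally show ?case by (simp add: word_pow_Suc)
qed

context pc_graph
begin

lemma pc_step_restrict_gens: "pc_step E a b \<Longrightarrow>
    restrict_gens Y a = restrict_gens Y b \<or> pc_step E (restrict_gens Y a) (restrict_gens Y b)"
proof (induct rule: pc_step.cases)
  case (cancel xs x b ys)
  then show ?case using pc_step.cancel[of E "restrict_gens Y xs" x b "restrict_gens Y ys"]
    by (auto simp: restrict_gens_def)
next
  case (commute x y xs b c ys)
  then show ?case using pc_step.commute[of E x y "restrict_gens Y xs" b c "restrict_gens Y ys"]
    by (auto simp: restrict_gens_def)
qed

lemma pc_eq_restrict_gens: "pc_eq E a b \<Longrightarrow> pc_eq E (restrict_gens Y a) (restrict_gens Y b)"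
  using pc_eq_map[of E "restrict_gens Y"] pc_step_restrict_gens by blast

lemma pc_eq_append_commute: "(\<forall>a\<in>set s. \<forall>b\<in>set t. E (fst a) (fst b)) \<Longrightarrow> pc_eq E (s @ t) (t @ s)"
proof -
  assume h: "\<forall>a\<in>set s. \<forall>b\<in>set t. E (fst a) (fst b)"
  have "proj_eq E (s @ t) (t @ s)" unfolding proj_eq_def
  proof (intro allI impI)
    fix p q assume pq: "\<not> E p q"
    have "pair_proj p q s = [] \<or> pair_proj p q t = []"
    proof (rule ccontr)
      assume "\<not> (pair_proj p q s = [] \<or> pair_proj p q t = [])"
      then obtain a b where a: "a \<in> set s" "fst a = p \<or> fst a = q" and b: "b \<in> set t" "fst b = p \<or> fst b = q"
        unfolding pair_proj_def by (auto simp: filter_empty_conv)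
      have "E (fst a) (fst b)" using h a b by blast
      then show False using a(2) b(2) pq E_sym by auto
    qed
    then show "pair_proj p q (s @ t) = pair_proj p q (t @ s)" by auto
  qed
  then show ?thesis by (rule proj_eq_imp_pc_eq)
qed

lemma gens_commute_if_E: "E a b \<Longrightarrow> gens_commute E a b"
  unfolding gens_commute_def using pc_eq_swap[of "(a, False)" "(b, False)" "[]" "[]"] by simp

lemma pc_reduced_prefix: "pc_reduced E (s @ t) \<Longrightarrow> pc_reduced E s"
  unfolding pc_reduced_def by (simp add: no_inverse_pair_append)

lemma pc_nf_pc_reduced: "pc_reduced E w \<Longrightarrow> pc_nf E w = w"
proof (induct w rule: rev_induct)
  case Nil then show ?case by (simp add: pc_nf_def)
next
  case (snoc a w)
  have pw: "pc_reduced E w" using pc_reduced_prefix snoc(2) by blast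
  have nc: "\<not> cancels E w a"
  proof
    assume "cancels E w a"
    then obtain xs ys where w: "w = xs @ inv_letter a # ys" and ys: "\<forall>m\<in>set ys. E (fst a) (fst m)"
      unfolding cancels_def by blast
    have "nc_filter E (fst a) ys = []" using ys unfolding nc_filter_def by (auto simp: filter_empty_conv)
    then have "nc_filter E (fst a) (w @ [a]) = nc_filter E (fst a) xs @ [inv_letter a, a]"
      using w by (simp add: nc_filter_Cons)
    then have "\<not> no_inverse_pair (fst a) (nc_filter E (fst a) (w @ [a]))"
      using no_inverse_pair_append[of "fst a" "nc_filter E (fst a) xs" "[inv_letter a, a]"] by simp
    then show False using snoc(2) unfolding pc_reduced_def by blast
  qed
  have "pc_nf E (w @ [a]) = reduce_snoc E (pc_nf E w) a" by (simp add: pc_nf_def)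
  then show ?case using snoc(1)[OF pw] reduce_snoc_no_cancel[OF nc] by simp
qed

lemma pc_len_pc_reduced: "pc_reduced E w \<Longrightarrow> pc_len E w = length w"
  using pc_nf_pc_reduced pc_len_eq_length_pc_nf by metis

lemma no_inverse_pair_word_pow: "no_inverse_pair x s \<Longrightarrow>
    \<not> (s \<noteq> [] \<and> fst (last s) = x \<and> hd s = inv_letter (last s)) \<Longrightarrow> no_inverse_pair x (word_pow s n)"
proof (induct n)
  case (Suc n)
  have "word_pow s (Suc n) = s @ word_pow s n" by (simp add: word_pow_Suc)
  moreover have "word_pow s n \<noteq> [] \<Longrightarrow> hd (word_pow s n) = hd s"
    by (cases n) (auto simp: word_pow_Suc)
  ultimately show ?case using Suc by (auto simp: no_inverse_pair_append)
qed simp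

lemma nc_filter_word_pow: "nc_filter E x (word_pow w n) = word_pow (nc_filter E x w) n"
  by (simp add: nc_filter_def filter_word_pow)

lemma pc_eq_conj_of_nc_filter_ends:
  assumes hd: "nc_filter E (fst c) w = inv_letter c # s" and last: "last (nc_filter E (fst c) w) = c"
  shows "\<exists>t. pc_eq E w (inv_letter c # t @ [c]) \<and> length t + 2 = length w"
proof -
  let ?P = "\<lambda>l. \<not> E (fst c) (fst l)"
  obtain xs ys where w: "w = xs @ inv_letter c # ys" and xs: "\<forall>u\<in>set xs. E (fst c) (fst u)"
      and s: "filter ?P ys = s"
    using hd unfolding nc_filter_def filter_eq_Cons_iff by auto
  have "pc_eq E (inv_letter c # xs) (xs @ [inv_letter c])" using pc_eq_move_right xs by simp
  then have front: "pc_eq E w (inv_letter c # xs @ ys)"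
    using pc_eq_append_right[of E _ _ ys] pc_eq_sym w by fastforce
  have "s \<noteq> []" using last hd by (cases s) auto
  have "filter ?P (xs @ ys) = s" using xs s by (simp add: filter_empty_conv)
  also have "s = butlast s @ [c]"
    using \<open>s \<noteq> []\<close> last hd by (metis append_butlast_last_id last_ConsR)
  finally obtain t1 t2 where t: "xs @ ys = t1 @ c # t2" and t2: "filter ?P t2 = []"
    using filter_eq_snoc by meson
  have "\<forall>m\<in>set t2. E (fst c) (fst m)" using t2 by (auto simp: filter_empty_conv)
  then have "pc_eq E (c # t2) (t2 @ [c])" by (rule pc_eq_move_right)
  then have "pc_eq E (inv_letter c # xs @ ys) (inv_letter c # t1 @ t2 @ [c])"
    using pc_eq_context[of E "c # t2" "t2 @ [c]" "inv_letter c # t1" "[]"] t by simp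
  with front have "pc_eq E w (inv_letter c # (t1 @ t2) @ [c])" by (simp add: pc_eq_trans)
  moreover have "length (t1 @ t2) + 2 = length w" using w arg_cong[OF t, of length] by simp
  ultimately show ?thesis by blast
qed

text \<open>Otherwise conjugating by the first letter of \<open>nc_filter\<close> would shorten \<open>v\<close>.\<close>
lemma cyc_minimal_nc_filter_ends:
  assumes cm: "cyc_minimal E v"
  shows "\<not> (nc_filter E x (pc_nf E v) \<noteq> [] \<and> fst (last (nc_filter E x (pc_nf E v))) = x
    \<and> hd (nc_filter E x (pc_nf E v)) = inv_letter (last (nc_filter E x (pc_nf E v))))"
    (is "\<not> (?s \<noteq> [] \<and> _)")
proof
  assume h: "?s \<noteq> [] \<and> fst (last ?s) = x \<and> hd ?s = inv_letter (last ?s)"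
  define c where "c = last ?s"
  have x: "fst c = x" using h c_def by simp
  have "nc_filter E (fst c) (pc_nf E v) = inv_letter c # tl ?s"
    using h c_def x by (metis list.collapse)
  moreover have "last (nc_filter E (fst c) (pc_nf E v)) = c" using c_def x by simp
  ultimately obtain t where t: "pc_eq E (pc_nf E v) (inv_letter c # t @ [c])"
      and len: "length t + 2 = length (pc_nf E v)"
    using pc_eq_conj_of_nc_filter_ends by blast
  have "pc_eq E (inv_word [inv_letter c] @ v @ [inv_letter c])
      ([c] @ (inv_letter c # t @ [c]) @ [inv_letter c])"
    using pc_eq_context[OF pc_eq_trans[OF pc_eq_pc_nf t], of "[c]" "[inv_letter c]"] by simp
  also have "\<dots> = [] @ [c, inv_letter c] @ (t @ [c, inv_letter c])" by simp
  also have "pc_eq E \<dots> ([] @ [] @ (t @ [c, inv_letter c]))"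
    by (rule pc_eq_context, rule pc_eq_inverse_pair)
  also have "\<dots> = t @ [c, inv_letter c] @ []" by simp
  also have "pc_eq E \<dots> (t @ [] @ [])"
    by (rule pc_eq_context, rule pc_eq_inverse_pair)
  finally have "pc_len E (inv_word [inv_letter c] @ v @ [inv_letter c]) \<le> length t"
    using pc_len_le_length by fastforce
  moreover have "pc_len E v \<le> pc_len E (inv_word [inv_letter c] @ v @ [inv_letter c])"
    using cm unfolding cyc_minimal_def by blast
  ultimately show False using len pc_len_eq_length_pc_nf[of v] by linarith
qed

lemma pc_reduced_word_pow_pc_nf:
  assumes cm: "cyc_minimal E v"
  shows "pc_reduced E (word_pow (pc_nf E v) n)"
  unfolding pc_reduced_def nc_filter_word_pow
proof
  fix x
  have np: "no_inverse_pair x (nc_filter E x (pc_nf E v))" using pc_reduced_pc_nf unfolding pc_reduced_def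
    by blast
  show "no_inverse_pair x (word_pow (nc_filter E x (pc_nf E v)) n)"
    by (rule no_inverse_pair_word_pow[OF np cyc_minimal_nc_filter_ends[OF cm]])
qed

lemma pc_len_word_pow_pc_nf:
  assumes cm: "cyc_minimal E v"
  shows "pc_len E (word_pow (pc_nf E v) n) = n * length (pc_nf E v)"
  using pc_len_pc_reduced[OF pc_reduced_word_pow_pc_nf[OF cm]] by (simp add: length_word_pow)

end

definition gen_count :: "'a \<Rightarrow> 'a letter list \<Rightarrow> nat" where
  "gen_count a s = length (filter (\<lambda>l. fst l = a) s)"

lemma gen_count_pair_proj1: "gen_count a (pair_proj a b s) = gen_count a s"
  unfolding gen_count_def pair_proj_def filter_filter
    by (rule arg_cong[where f = length], rule filter_cong) auto
lemma gen_count_pair_proj2: "gen_count b (pair_proj a b s) = gen_count b s"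
  unfolding gen_count_def pair_proj_def filter_filter
    by (rule arg_cong[where f = length], rule filter_cong) auto
lemma gen_count_word_pow: "gen_count a (word_pow s m) = m * gen_count a s"
  unfolding gen_count_def by (simp add: filter_word_pow length_word_pow)
lemma gen_count_pos: "a \<in> gens s \<Longrightarrow> gen_count a s > 0"
  unfolding gen_count_def by (auto simp: filter_empty_conv)

lemma pair_proj_restrict_gens: "a \<in> B \<Longrightarrow> b \<in> B \<Longrightarrow> pair_proj a b (restrict_gens B w) = pair_proj a b w"
  unfolding pair_proj_def restrict_gens_def filter_filter by (intro filter_cong) auto

lemma filter_split_uniform:
  assumes "(\<forall>l\<in>set R. P l \<longrightarrow> Q l) \<or> (\<forall>l\<in>set R. P l \<longrightarrow> \<not> Q l)"
  shows "filter P R = filter P (filter Q R) @ filter P (filter (\<lambda>l. \<not> Q l) R)"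
  using assms
proof
  assume h: "\<forall>l\<in>set R. P l \<longrightarrow> Q l"
  then have "filter P (filter Q R) = filter P R" unfolding filter_filter by (intro filter_cong) auto
  moreover have "filter P (filter (\<lambda>l. \<not> Q l) R) = []"
    using h unfolding filter_filter by (auto simp: filter_empty_conv)
  ultimately show ?thesis by simp
next
  assume h: "\<forall>l\<in>set R. P l \<longrightarrow> \<not> Q l"
  then have "filter P (filter (\<lambda>l. \<not> Q l) R) = filter P R" unfolding filter_filter by (intro filter_cong) auto
  moreover have "filter P (filter Q R) = []" using h unfolding filter_filter by (auto simp: filter_empty_conv)
  ultimately show ?thesis by simp
qed

lemma exists_step_attaining_bound:
  fixes f :: "nat \<Rightarrow> nat"
  assumes step: "\<And>n. f (Suc n) \<le> f n + c" and lower: "\<And>n. n * c \<le> d + f n"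
  shows "\<exists>n. f (Suc n) = f n + c"
proof (rule ccontr)
  assume "\<nexists>n. f (Suc n) = f n + c"
  then have lt: "f (Suc n) < f n + c" for n using step le_neq_implies_less by blast
  have "f n + n \<le> f 0 + n * c" for n
  proof (induct n)
    case (Suc n) then show ?case using lt[of n] by simp
  qed simp
  from this[of "d + f 0 + 1"] lower[of "d + f 0 + 1"] show False by linarith
qed

lemma gens_restrict_gens: "gens (restrict_gens Y w) \<subseteq> Y"
  by (auto simp: restrict_gens_def)

lemma gens_word_pow_subset: "gens (word_pow w n) \<subseteq> gens w"
  using set_word_pow_sub by blast

text \<open>With \<open>M a = N b + 1\<close>, the witness is \<open>h = p\<^sup>a q\<^sup>-\<^sup>b\<close>: \<open>h\<^sup>N = p\<^sup>N\<^sup>a q\<^sup>-\<^sup>N\<^sup>b = q\<^sup>M\<^sup>a\<^sup>-\<^sup>N\<^sup>b = q\<close>.\<close>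
lemma coprime_power_root:
  assumes pq: "pc_eq E (p @ q) (q @ p)" and pow: "pc_eq E (word_pow p N) (word_pow q M)"
    and cop: "coprime M N" and M: "M \<noteq> 0"
  shows "\<exists>h. pc_eq E (word_pow h N) q"
proof -
  obtain a b where ab: "M * a = N * b + 1" using bezout_nat[OF M, of N] cop by auto
  define h where "h = word_pow p a @ word_pow (inv_word q) b"
  have "pc_eq E (p @ inv_word q) (inv_word q @ p)" by (rule pc_eq_commute_inv_word[OF pq])
  then have "pc_eq E (word_pow h N) (word_pow (word_pow p a) N @ word_pow (word_pow (inv_word q) b) N)"
    unfolding h_def by (intro pc_eq_word_pow_append pc_eq_commute_word_pows)
  also have "\<dots> = word_pow (word_pow p N) a @ word_pow (inv_word q) (N * b)"
    by (metis word_pow_mult mult.commute)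
  also have "pc_eq E \<dots> (word_pow (word_pow q M) a @ word_pow (inv_word q) (N * b))"
    by (intro pc_eq_append_right pc_eq_word_pow pow)
  also have "\<dots> = q @ word_pow q (N * b) @ word_pow (inv_word q) (N * b)"
    using ab by (metis word_pow_mult word_pow_Suc Suc_eq_plus1 append_assoc)
  also have "pc_eq E \<dots> (q @ [])"
    by (rule pc_eq_append_left, rule pc_eq_word_pow_inverse)
  finally show ?thesis by auto
qed

lemma root_element_coprime_exponent:
  assumes rt: "root_element E v" and vq: "pc_eq E v q" and pq: "pc_eq E (p @ q) (q @ p)"
    and pow: "pc_eq E (word_pow p N) (word_pow q M)" and cop: "coprime M N" and N: "N > 0"
  shows "N = 1"
proof (cases "M = 0")
  case True then show ?thesis using cop by simp
next
  case False
  then obtain h where "pc_eq E (word_pow h N) q" using coprime_power_root[OF pq pow cop] by blast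
  then have "pc_eq E v (word_pow h N)" using vq pc_eq_sym pc_eq_trans by blast
  then have "\<not> N \<ge> 2" using rt unfolding root_element_def by blast
  then show ?thesis using N by linarith
qed

lemma pc_eq_cancel_word_pow:
  assumes zq: "pc_eq E (z @ inv_word q) (inv_word q @ z)"
    and eq: "pc_eq E (w @ word_pow q n) (word_pow q M @ z)"
  shows "\<exists>s k. (s = q \<or> s = inv_word q) \<and> pc_eq E w (word_pow s k @ z)"
proof -
  have "pc_eq E w (w @ word_pow q n @ word_pow (inv_word q) n)"
    using pc_eq_append_left[OF pc_eq_sym[OF pc_eq_word_pow_inverse[of E q n]], of w] by simp
  also have "pc_eq E \<dots> ((word_pow q M @ z) @ word_pow (inv_word q) n)"
    using pc_eq_append_right[OF eq, of "word_pow (inv_word q) n"] by simp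
  also have "pc_eq E \<dots> (word_pow q M @ word_pow (inv_word q) n @ z)"
    using pc_eq_append_left[OF pc_eq_commute_word_pow[OF zq[THEN pc_eq_sym]], of "word_pow q M"]
    by (simp add: pc_eq_sym)
  finally have w: "pc_eq E w (word_pow q M @ word_pow (inv_word q) n @ z)" .
  show ?thesis
  proof (cases "n \<le> M")
    case True
    have "word_pow q M @ word_pow (inv_word q) n @ z
        = word_pow q (M - n) @ (word_pow q n @ word_pow (inv_word q) n) @ z"
      using word_pow_add[of q "M - n" n] True by simp
    also have "pc_eq E \<dots> (word_pow q (M - n) @ [] @ z)"
      by (rule pc_eq_context, rule pc_eq_word_pow_inverse)
    finally show ?thesis using w pc_eq_trans by (metis append_Nil)
  next
    case False
    have "word_pow q M @ word_pow (inv_word q) n @ z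
        = [] @ (word_pow q M @ word_pow (inv_word q) M) @ word_pow (inv_word q) (n - M) @ z"
      using word_pow_add[of "inv_word q" M "n - M"] False by simp
    also have "pc_eq E \<dots> ([] @ [] @ word_pow (inv_word q) (n - M) @ z)"
      by (rule pc_eq_context, rule pc_eq_word_pow_inverse)
    finally show ?thesis using w pc_eq_trans by (metis append_Nil)
  qed
qed

definition pc_link :: "('a \<Rightarrow> 'a \<Rightarrow> bool) \<Rightarrow> 'a set \<Rightarrow> 'a set" where
  "pc_link E B = {y. y \<notin> B \<and> (\<forall>b\<in>B. E b y)}"

context pc_graph
begin

lemma pc_minimal_iff: "pc_minimal E w \<longleftrightarrow> pc_len E w = length w"
proof
  assume "pc_minimal E w"
  then have "length w \<le> length (pc_nf E w)" using pc_eq_pc_nf unfolding pc_minimal_def by blast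
  then show "pc_len E w = length w" using pc_len_eq_length_pc_nf length_pc_nf_le by (metis le_antisym)
next
  assume "pc_len E w = length w"
  then show "pc_minimal E w" unfolding pc_minimal_def using pc_len_le_length by metis
qed

lemma pc_alpha_eq_pc_nf: "pc_alpha E v = gens (pc_nf E v)"
  unfolding pc_alpha_def
proof (rule someI2[where a = "pc_nf E v"])
  show "pc_eq E v (pc_nf E v) \<and> pc_minimal E (pc_nf E v)"
    using pc_eq_pc_nf pc_minimal_iff pc_len_eq_length_pc_nf pc_nf_idem by metis
next
  fix x assume h: "pc_eq E v x \<and> pc_minimal E x"
  then have nx: "pc_nf E x = x" using pc_minimal_iff pc_nf_eq_if_geodesic by blast
  have "proj_eq E (pc_nf E x) (pc_nf E v)" using h pc_eq_sym proj_eq_pc_nf by blast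
  then show "gens x = gens (pc_nf E v)" using nx proj_eq_gens by metis
qed

lemma pc_eq_Nil_if_pc_len_0: "pc_len E g = 0 \<Longrightarrow> pc_eq E g []"
  using pc_eq_pc_nf pc_len_eq_length_pc_nf by (metis length_0_conv)

lemma root_element_not_trivial: "root_element E v \<Longrightarrow> \<not> pc_eq E v []"
  unfolding root_element_def by (metis word_pow_Nil order_refl)

lemma root_element_word_pow_exponent:
  assumes rt: "root_element E u" and u: "pc_eq E u (word_pow s k)"
  shows "k = 1"
proof -
  have "k \<noteq> 0" using u root_element_not_trivial[OF rt] by (cases k) auto
  moreover have "\<not> k \<ge> 2" using u rt unfolding root_element_def by blast
  ultimately show ?thesis by simp
qed

lemma pc_len_append_word_pow_lower:
  assumes cm: "cyc_minimal E v"
  shows "n * length (pc_nf E v) \<le> length w + pc_len E (w @ word_pow (pc_nf E v) n)"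
proof -
  let ?q = "pc_nf E v"
  have "pc_eq E (word_pow ?q n) ((inv_word w @ w) @ word_pow ?q n)"
    using pc_eq_append_right[OF pc_eq_sym[OF pc_eq_left_inverse[of E w]], of "word_pow ?q n"] by simp
  also have "pc_eq E \<dots> (inv_word w @ pc_nf E (w @ word_pow ?q n))"
    using pc_eq_append_left[OF pc_eq_pc_nf[of "w @ word_pow ?q n"], of "inv_word w"] by simp
  finally have "pc_len E (word_pow ?q n) \<le> length (inv_word w @ pc_nf E (w @ word_pow ?q n))"
    by (rule pc_len_le_length)
  then show ?thesis using pc_len_word_pow_pc_nf[OF cm, of n] pc_len_eq_length_pc_nf[of "w @ word_pow ?q n"]
    by simp
qed

text \<open>The lengths \<open>l(w q\<^sup>n)\<close> grow by at most \<open>|q|\<close> per step but, by the lower bound, not always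
  by less; at a step where they grow by exactly \<open>|q|\<close>, both \<open>R q\<close> and \<open>q R\<close> are geodesic.\<close>
lemma commuting_power_translate:
  assumes cm: "cyc_minimal E v" and wc: "pc_eq E (w @ v) (v @ w)"
  shows "\<exists>R n. pc_eq E (w @ word_pow (pc_nf E v) n) R \<and> proj_eq E (R @ pc_nf E v) (pc_nf E v @ R)"
proof -
  define q where "q = pc_nf E v"
  define f where "f n = pc_len E (w @ word_pow q n)" for n
  have f: "f n = length (pc_nf E (w @ word_pow q n))" for n
    unfolding f_def by (rule pc_len_eq_length_pc_nf)
  have vq: "pc_eq E v q" using pc_eq_pc_nf q_def by simp
  have wq: "pc_eq E (w @ q) (q @ w)"
    using pc_eq_append_left[OF pc_eq_sym[OF vq], of w] wc pc_eq_append_right[OF vq, of w] pc_eq_trans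
    by blast
  have right: "pc_eq E (w @ word_pow q (Suc n)) (pc_nf E (w @ word_pow q n) @ q)" for n
    using pc_eq_append_right[OF pc_eq_pc_nf[of "w @ word_pow q n"], of q] by (simp add: word_pow_Suc_right)
  have left: "pc_eq E (w @ word_pow q (Suc n)) (q @ pc_nf E (w @ word_pow q n))" for n
  proof -
    have "pc_eq E (w @ word_pow q (Suc n)) ((q @ w) @ word_pow q n)"
      using pc_eq_append_right[OF wq, of "word_pow q n"] by (simp add: word_pow_Suc)
    also have "pc_eq E \<dots> (q @ pc_nf E (w @ word_pow q n))"
      using pc_eq_append_left[OF pc_eq_pc_nf[of "w @ word_pow q n"], of q] by simp
    finally show ?thesis .
  qed
  have "f (Suc n) \<le> f n + length q" for n
    using pc_len_le_length[OF right[of n]] f[of n] unfolding f_def by simp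
  moreover have "n * length q \<le> length w + f n" for n
    using pc_len_append_word_pow_lower[OF cm] unfolding f_def q_def by blast
  ultimately have "\<exists>n. f (Suc n) = f n + length q" by (rule exists_step_attaining_bound)
  then obtain n where n: "f (Suc n) = f n + length q" by blast
  define R where "R = pc_nf E (w @ word_pow q n)"
  have "pc_len E (R @ q) = length (R @ q)" "pc_len E (q @ R) = length (q @ R)"
    using n f[of n] pc_len_cong[OF right[of n]] pc_len_cong[OF left[of n]] unfolding f_def R_def
    by simp_all
  moreover have "pc_eq E (R @ q) (q @ R)"
    using right[of n] left[of n] pc_eq_sym pc_eq_trans unfolding R_def by blast
  ultimately have "proj_eq E (R @ q) (q @ R)" by (rule geodesic_pc_eq_imp_proj_eq)
  moreover have "pc_eq E (w @ word_pow q n) R" using pc_eq_pc_nf R_def by simp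
  ultimately show ?thesis using q_def by blast
qed

lemma pair_proj_common_root:
  assumes "proj_eq E (R @ q) (q @ R)" and "\<not> E a b"
  shows "\<exists>zs m k. word_pow zs m = pair_proj a b R \<and> word_pow zs k = pair_proj a b q"
proof -
  have "pair_proj a b R @ pair_proj a b q = pair_proj a b q @ pair_proj a b R"
    using assms unfolding proj_eq_def by simp
  from comm_append_are_replicate[OF this] show ?thesis unfolding word_pow_def by blast
qed

lemma proj_commuting_link:
  assumes RC: "proj_eq E (R @ q) (q @ R)" and l: "l \<in> set R" "fst l \<notin> gens q"
  shows "fst l \<in> pc_link E (gens q)"
  unfolding pc_link_def
proof (intro CollectI conjI ballI l(2))
  fix b assume b: "b \<in> gens q"
  show "E b (fst l)"
  proof (rule ccontr)
    assume "\<not> E b (fst l)"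
    then obtain zs m k where zm: "word_pow zs m = pair_proj b (fst l) R"
        and zk: "word_pow zs k = pair_proj b (fst l) q"
      using pair_proj_common_root[OF RC] by blast
    have "pair_proj b (fst l) q \<noteq> []" using b unfolding pair_proj_def by (auto simp: filter_empty_conv)
    then have "k > 0" using zk by (cases k) auto
    have "l \<in> set (word_pow zs m)" using l(1) zm unfolding pair_proj_def by simp
    then have "l \<in> set (word_pow zs k)" using set_word_pow_sub set_word_pow[OF \<open>k > 0\<close>] by blast
    then have "l \<in> set q" using zk unfolding pair_proj_def by simp
    then show False using l(2) by auto
  qed
qed

lemma gen_count_ratio:
  assumes "proj_eq E (R @ q) (q @ R)" and "\<not> E a b"
  shows "gen_count a R * gen_count b q = gen_count b R * gen_count a q"
proof -
  obtain zs m k where zm: "word_pow zs m = pair_proj a b R" and zk: "word_pow zs k = pair_proj a b q"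
    using pair_proj_common_root[OF assms] by blast
  have "gen_count a R = m * gen_count a zs" using gen_count_pair_proj1[of a b R] zm gen_count_word_pow
    by metis
  moreover have "gen_count a q = k * gen_count a zs"
    using gen_count_pair_proj1[of a b q] zk gen_count_word_pow by metis
  moreover have "gen_count b R = m * gen_count b zs"
    using gen_count_pair_proj2[of b a R] zm gen_count_word_pow by metis
  moreover have "gen_count b q = k * gen_count b zs"
    using gen_count_pair_proj2[of b a q] zk gen_count_word_pow by metis
  ultimately show ?thesis by (simp add: ac_simps)
qed

lemma gen_count_ratio_connected:
  assumes RC: "proj_eq E (R @ q) (q @ R)" and conn: "Phi_connected E (gens q)"
    and x: "x \<in> gens q" and y: "y \<in> gens q"
  shows "gen_count x R * gen_count y q = gen_count y R * gen_count x q"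
proof -
  have "(\<lambda>a b. a \<in> gens q \<and> b \<in> gens q \<and> a \<noteq> b \<and> \<not> gens_commute E a b)\<^sup>*\<^sup>* x y"
    using conn x y unfolding Phi_connected_def by blast
  then show ?thesis
  proof (induct rule: rtranclp_induct)
    case (step y z)
    have yq: "y \<in> gens q" and yz: "\<not> E y z" using step(2) gens_commute_if_E by auto
    have r: "gen_count y R * gen_count z q = gen_count z R * gen_count y q"
      using gen_count_ratio[OF RC yz] .
    have "gen_count y q * (gen_count x R * gen_count z q)
        = (gen_count x R * gen_count y q) * gen_count z q"
      by (simp add: ac_simps)
    also have "\<dots> = gen_count x q * (gen_count y R * gen_count z q)"
      using step(3) by (simp add: ac_simps)
    also have "\<dots> = gen_count y q * (gen_count z R * gen_count x q)"
      using r by (simp add: ac_simps)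
    finally show ?case using gen_count_pos[OF yq] by simp
  qed simp
qed

lemma pair_proj_power_eq:
  assumes RC: "proj_eq E (R @ q) (q @ R)" and ab: "\<not> E a b" and pos: "gen_count a q > 0"
    and ratio: "gen_count a R * N = M * gen_count a q"
  shows "word_pow (pair_proj a b R) N = word_pow (pair_proj a b q) M"
proof -
  obtain zs m k where zm: "word_pow zs m = pair_proj a b R" and zk: "word_pow zs k = pair_proj a b q"
    using pair_proj_common_root[OF RC ab] by blast
  have cR: "gen_count a R = m * gen_count a zs"
    using gen_count_pair_proj1[of a b R] zm gen_count_word_pow by metis
  have cq: "gen_count a q = k * gen_count a zs"
    using gen_count_pair_proj1[of a b q] zk gen_count_word_pow by metis
  then have "gen_count a zs > 0" using pos by (cases "gen_count a zs") auto
  moreover have "gen_count a zs * (m * N) = gen_count a zs * (k * M)"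
    using ratio cR cq by (simp add: ac_simps)
  ultimately have "m * N = k * M" by simp
  have "word_pow (pair_proj a b R) N = word_pow zs (m * N)" using zm word_pow_mult by metis
  also have "\<dots> = word_pow (pair_proj a b q) M" using \<open>m * N = k * M\<close> zk word_pow_mult by metis
  finally show ?thesis .
qed

lemma proj_eq_on_alphabet:
  assumes s: "gens s \<subseteq> B" and t: "gens t \<subseteq> B"
    and pairs: "\<And>a b. a \<in> B \<Longrightarrow> b \<in> B \<Longrightarrow> \<not> E a b \<Longrightarrow> pair_proj a b s = pair_proj a b t"
  shows "proj_eq E s t"
  unfolding proj_eq_def
proof (intro allI impI)
  fix a b assume ab: "\<not> E a b"
  have drop: "pair_proj a b w = pair_proj c c w"
    if "gens w \<subseteq> B" "c = a \<or> c = b" "{a, b} \<inter> B \<subseteq> {c}" for w c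
    unfolding pair_proj_def using that by (intro filter_cong) auto
  consider "a \<in> B" "b \<in> B" | "a \<in> B" "b \<notin> B" | "a \<notin> B" "b \<in> B" | "a \<notin> B" "b \<notin> B" by blast
  then show "pair_proj a b s = pair_proj a b t"
  proof cases
    case 1 then show ?thesis using pairs ab by blast
  next
    case 2 then show ?thesis using drop[OF s, of a] drop[OF t, of a] pairs[of a a] by auto
  next
    case 3 then show ?thesis using drop[OF s, of b] drop[OF t, of b] pairs[of b b] by auto
  next
    case 4
    then have "pair_proj a b w = []" if "gens w \<subseteq> B" for w
      using that unfolding pair_proj_def by (force simp: filter_empty_conv)
    then show ?thesis using s t by simp
  qed
qed

lemma pc_eq_restrict_gens_split:
  assumes link: "\<forall>l\<in>set R. fst l \<notin> B \<longrightarrow> fst l \<in> pc_link E B"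
  shows "pc_eq E R (restrict_gens B R @ restrict_gens (- B) R)"
proof (rule proj_eq_imp_pc_eq, unfold proj_eq_def, intro allI impI)
  fix a b assume ab: "\<not> E a b"
  let ?P = "\<lambda>l. fst l = a \<or> fst l = b"
  have "(\<forall>l\<in>set R. ?P l \<longrightarrow> fst l \<in> B) \<or> (\<forall>l\<in>set R. ?P l \<longrightarrow> fst l \<notin> B)"
  proof (cases "a \<in> B \<or> b \<in> B")
    case True
    have "fst l \<in> B" if "l \<in> set R" "?P l" for l
      using link that True ab E_sym unfolding pc_link_def by blast
    then show ?thesis by blast
  qed auto
  then show "pair_proj a b R = pair_proj a b (restrict_gens B R @ restrict_gens (- B) R)"
    unfolding pair_proj_def restrict_gens_def filter_append Compl_iff by (rule filter_split_uniform)
qed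

lemma pc_eq_commute_restrict_gens:
  assumes RC: "proj_eq E (R @ q) (q @ R)"
  shows "pc_eq E (restrict_gens (gens q) R @ q) (q @ restrict_gens (gens q) R)"
proof (rule proj_eq_imp_pc_eq, rule proj_eq_on_alphabet[where B = "gens q"])
  fix a b assume ab: "a \<in> gens q" "b \<in> gens q" "\<not> E a b"
  have "pair_proj a b R @ pair_proj a b q = pair_proj a b q @ pair_proj a b R"
    using RC ab(3) unfolding proj_eq_def by simp
  then show "pair_proj a b (restrict_gens (gens q) R @ q) = pair_proj a b (q @ restrict_gens (gens q) R)"
    using pair_proj_restrict_gens[OF ab(1,2)] by simp
qed (use gens_restrict_gens[of "gens q" R] in auto)

lemma proj_commuting_power_eq:
  assumes RC: "proj_eq E (R @ q) (q @ R)" and conn: "Phi_connected E (gens q)" and "q \<noteq> []"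
  shows "\<exists>M N. coprime M N \<and> N > 0 \<and> proj_eq E (word_pow (restrict_gens (gens q) R) N) (word_pow q M)"
proof -
  define B where "B = gens q"
  obtain x where x: "x \<in> B" using \<open>q \<noteq> []\<close> B_def by fastforce
  define g where "g = gcd (gen_count x R) (gen_count x q)"
  define M where "M = gen_count x R div g"
  define N where "N = gen_count x q div g"
  have qpos: "gen_count a q > 0" if "a \<in> B" for a using gen_count_pos that B_def by simp
  have "g > 0" using qpos[OF x] g_def by simp
  have xR: "gen_count x R = M * g" and xq: "gen_count x q = N * g" using g_def M_def N_def by simp_all
  have "N > 0" using xq qpos[OF x] by (cases N) auto
  have cop: "coprime M N" unfolding M_def N_def g_def using qpos[OF x] by (intro div_gcd_coprime) simp
  have ratio: "gen_count a R * N = M * gen_count a q" if a: "a \<in> B" for a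
  proof -
    have "g * (gen_count a R * N) = gen_count a R * gen_count x q" using xq by (simp add: ac_simps)
    also have "\<dots> = gen_count x R * gen_count a q"
      using gen_count_ratio_connected[OF RC conn, of x a] a x B_def by simp
    also have "\<dots> = g * (M * gen_count a q)" using xR by (simp add: ac_simps)
    finally show ?thesis using \<open>g > 0\<close> by simp
  qed
  have "pair_proj a b (word_pow (restrict_gens B R) N) = pair_proj a b (word_pow q M)"
    if ab: "a \<in> B" "b \<in> B" "\<not> E a b" for a b
    using pair_proj_power_eq[OF RC ab(3) qpos[OF ab(1)] ratio[OF ab(1)]] pair_proj_restrict_gens[OF ab(1,2)]
    by (simp add: pair_proj_word_pow)
  moreover have "gens (word_pow (restrict_gens B R) N) \<subseteq> B"
    using gens_word_pow_subset gens_restrict_gens by (rule subset_trans)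
  moreover have "gens (word_pow q M) \<subseteq> B" using gens_word_pow_subset unfolding B_def .
  ultimately have "proj_eq E (word_pow (restrict_gens B R) N) (word_pow q M)"
    by (intro proj_eq_on_alphabet)
  then show ?thesis using cop \<open>N > 0\<close> B_def by blast
qed

lemma pc_eq_commute_link:
  assumes z: "gens z \<subseteq> pc_link E B" and t: "gens t \<subseteq> B"
  shows "pc_eq E (z @ t) (t @ z)"
proof (rule pc_eq_append_commute, intro ballI)
  fix a b assume "a \<in> set z" "b \<in> set t"
  then have "E (fst b) (fst a)" using z t unfolding pc_link_def by auto
  then show "E (fst a) (fst b)" by (rule E_sym)
qed

theorem centraliser_of_block:
  assumes cm: "cyc_minimal E v" and rt: "root_element E v"
    and conn: "Phi_connected E (pc_alpha E v)" and wc: "pc_eq E (w @ v) (v @ w)"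
  shows "\<exists>s k z. (s = pc_nf E v \<or> s = inv_word (pc_nf E v)) \<and> pc_eq E w (word_pow s k @ z)
    \<and> gens z \<subseteq> pc_link E (pc_alpha E v)"
proof -
  define q where "q = pc_nf E v"
  define B where "B = gens q"
  have B: "pc_alpha E v = B" using pc_alpha_eq_pc_nf q_def B_def by simp
  have vq: "pc_eq E v q" using pc_eq_pc_nf q_def by simp
  then have "q \<noteq> []" using root_element_not_trivial[OF rt] by auto
  obtain R n where wR: "pc_eq E (w @ word_pow q n) R" and RC: "proj_eq E (R @ q) (q @ R)"
    using commuting_power_translate[OF cm wc] q_def by blast
  define p where "p = restrict_gens B R"
  define z where "z = restrict_gens (- B) R"
  have link: "\<forall>l\<in>set R. fst l \<notin> B \<longrightarrow> fst l \<in> pc_link E B"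
    using proj_commuting_link[OF RC] B_def by blast
  then have zL: "gens z \<subseteq> pc_link E B" unfolding z_def restrict_gens_def by auto
  have "Phi_connected E (gens q)" using conn B B_def by simp
  then obtain M N where "coprime M N" "N > 0" and pow: "proj_eq E (word_pow p N) (word_pow q M)"
    using proj_commuting_power_eq[OF RC _ \<open>q \<noteq> []\<close>] unfolding p_def B_def by blast
  moreover have "pc_eq E (p @ q) (q @ p)" using pc_eq_commute_restrict_gens[OF RC] p_def B_def by simp
  ultimately have "N = 1" using root_element_coprime_exponent[OF rt vq] proj_eq_imp_pc_eq by blast
  then have "pc_eq E p (word_pow q M)" using proj_eq_imp_pc_eq[OF pow] by simp
  then have "pc_eq E (p @ z) (word_pow q M @ z)" by (rule pc_eq_append_right)
  with wR pc_eq_restrict_gens_split[OF link] have wz: "pc_eq E (w @ word_pow q n) (word_pow q M @ z)"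
    unfolding p_def z_def by (blast intro: pc_eq_trans)
  have "pc_eq E (z @ inv_word q) (inv_word q @ z)" using zL B_def by (intro pc_eq_commute_link) auto
  from pc_eq_cancel_word_pow[OF this wz] obtain s k where "s = q \<or> s = inv_word q"
    and "pc_eq E w (word_pow s k @ z)" by blast
  then show ?thesis using zL B q_def by (intro exI[of _ s] exI[of _ k] exI[of _ z]) simp
qed

lemma pc_len_pc_nf: "pc_len E (pc_nf E w) = length (pc_nf E w)"
  using pc_len_eq_length_pc_nf pc_nf_idem by metis

lemma gens_pc_nf_or_inv: "s = pc_nf E v \<or> s = inv_word (pc_nf E v) \<Longrightarrow> gens s = pc_alpha E v"
  by (elim disjE) (simp_all add: pc_alpha_eq_pc_nf)

lemma geodesic_alphabet_subset:
  assumes wt: "pc_eq E w t" and geo: "pc_len E w = length w" and t: "gens t \<subseteq> Y"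
  shows "gens w \<subseteq> Y"
proof -
  have "pc_eq E (restrict_gens Y w) t"
    using pc_eq_restrict_gens[OF wt, of Y] restrict_gens_id[OF t] by simp
  then have "pc_eq E w (restrict_gens Y w)" using wt pc_eq_sym pc_eq_trans by metis
  then have "pc_len E w \<le> length (restrict_gens Y w)" by (rule pc_len_le_length)
  then have "length (restrict_gens Y w) = length w" using geo length_restrict_gens[of Y w] by simp
  then show ?thesis by (rule restrict_gens_length_eq_imp_subset)
qed

lemma pc_eq_restrict_gens_link:
  assumes w: "pc_eq E w (t @ z)" and t: "gens t \<subseteq> B" and z: "gens z \<subseteq> pc_link E B"
  shows "pc_eq E (restrict_gens B w) t" and "pc_eq E (restrict_gens (pc_link E B) w) z"
proof -
  have "gens z \<inter> B = {}" and "gens t \<inter> pc_link E B = {}"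
    using t z unfolding pc_link_def by blast+
  then have "restrict_gens B (t @ z) = t" and "restrict_gens (pc_link E B) (t @ z) = z"
    using restrict_gens_id[OF t] restrict_gens_id[OF z] restrict_gens_Nil by simp_all
  then show "pc_eq E (restrict_gens B w) t" and "pc_eq E (restrict_gens (pc_link E B) w) z"
    using pc_eq_restrict_gens[OF w] by metis+
qed

lemma pc_eq_restrict_gens_conj_Nil:
  assumes "pc_eq E (restrict_gens Y u) []"
  shows "pc_eq E (restrict_gens Y (inv_word g @ u @ g)) []"
proof -
  have "pc_eq E (restrict_gens Y (inv_word g @ u @ g))
      (inv_word (restrict_gens Y g) @ [] @ restrict_gens Y g)"
    unfolding restrict_gens_append restrict_gens_inv_word by (rule pc_eq_context[OF assms])
  then show ?thesis using pc_eq_left_inverse pc_eq_trans by fastforce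
qed

lemma Phi_connected_link_union:
  assumes conn: "Phi_connected E A" and A: "A \<subseteq> B \<union> pc_link E B" and a: "a \<in> A" "a \<in> B"
  shows "A \<subseteq> B"
proof
  fix c assume "c \<in> A"
  then have "(\<lambda>x y. x \<in> A \<and> y \<in> A \<and> x \<noteq> y \<and> \<not> gens_commute E x y)\<^sup>*\<^sup>* a c"
    using conn a unfolding Phi_connected_def by blast
  then show "c \<in> B"
  proof (induct rule: rtranclp_induct)
    case (step y y')
    then have "\<not> E y y'" and "y' \<in> B \<union> pc_link E B" using gens_commute_if_E A by blast+
    then show ?case using step(3) unfolding pc_link_def by blast
  qed (use a in simp)
qed

text \<open>No edge of \<open>\<Phi>\<close> joins \<open>B\<close> to its link.\<close>
lemma geodesic_connected_link_split:
  assumes conn: "Phi_connected E (gens w)" and geo: "pc_len E w = length w"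
    and w: "pc_eq E w (t @ z)" and t: "gens t \<subseteq> B" and z: "gens z \<subseteq> pc_link E B"
  shows "pc_eq E t [] \<or> pc_eq E z []"
proof (rule ccontr)
  assume nontriv: "\<not> (pc_eq E t [] \<or> pc_eq E z [])"
  have "gens w \<inter> B \<noteq> {}"
  proof
    assume "gens w \<inter> B = {}"
    then have "restrict_gens B w = []" by (rule restrict_gens_Nil)
    then show False using pc_eq_restrict_gens_link(1)[OF w t z] nontriv pc_eq_sym by auto
  qed
  moreover have "gens w \<inter> pc_link E B \<noteq> {}"
  proof
    assume "gens w \<inter> pc_link E B = {}"
    then have "restrict_gens (pc_link E B) w = []" by (rule restrict_gens_Nil)
    then show False using pc_eq_restrict_gens_link(2)[OF w t z] nontriv pc_eq_sym by auto
  qed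
  moreover have "gens (t @ z) \<subseteq> B \<union> pc_link E B" using t z by auto
  then have "gens w \<subseteq> B \<union> pc_link E B" by (rule geodesic_alphabet_subset[OF w geo])
  ultimately show False using Phi_connected_link_union[OF conn] unfolding pc_link_def by blast
qed

lemma commuting_root_block_cases:
  assumes cmv: "cyc_minimal E v" and rtv: "root_element E v" and connv: "Phi_connected E (pc_alpha E v)"
    and rtu: "root_element E u" and connu: "Phi_connected E (pc_alpha E u)"
    and cu: "pc_eq E (u @ v) (v @ u)"
  shows "pc_alpha E u \<subseteq> pc_link E (pc_alpha E v)
    \<or> (\<exists>s. (s = pc_nf E v \<or> s = inv_word (pc_nf E v)) \<and> pc_eq E u s)"
proof -
  define B where "B = pc_alpha E v"
  obtain s k z where s: "s = pc_nf E v \<or> s = inv_word (pc_nf E v)"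
      and us: "pc_eq E u (word_pow s k @ z)" and zL: "gens z \<subseteq> pc_link E B"
    using centraliser_of_block[OF cmv rtv connv cu] B_def by blast
  have sB: "gens (word_pow s k) \<subseteq> B"
    using gens_word_pow_subset[of s k] gens_pc_nf_or_inv[OF s] B_def by simp
  have u0: "pc_eq E (pc_nf E u) (word_pow s k @ z)"
    using us pc_eq_pc_nf pc_eq_sym pc_eq_trans by blast
  have geo: "pc_len E (pc_nf E u) = length (pc_nf E u)" by (rule pc_len_pc_nf)
  have "Phi_connected E (gens (pc_nf E u))" using connu pc_alpha_eq_pc_nf by simp
  from geodesic_connected_link_split[OF this geo u0 sB zL] show ?thesis
  proof
    assume "pc_eq E (word_pow s k) []"
    then have "pc_eq E (word_pow s k @ z) ([] @ z)" by (rule pc_eq_append_right)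
    then have "pc_eq E (pc_nf E u) z" using u0 pc_eq_trans by auto
    then show ?thesis using geodesic_alphabet_subset[OF _ geo zL] pc_alpha_eq_pc_nf B_def by auto
  next
    assume "pc_eq E z []"
    then have usk: "pc_eq E u (word_pow s k)"
      using us pc_eq_append_left[of E z "[]" "word_pow s k"] pc_eq_trans by fastforce
    then have "k = 1" by (rule root_element_word_pow_exponent[OF rtu])
    then show ?thesis using usk s by auto
  qed
qed

lemma conj_pc_nf_geodesic:
  assumes "pc_len E (inv_word g @ u @ g) = pc_len E (inv_word g) + pc_len E u + pc_len E g"
  defines "w0 \<equiv> inv_word (pc_nf E g) @ pc_nf E u @ pc_nf E g"
  shows "pc_eq E (inv_word g @ u @ g) w0" and "pc_len E w0 = length w0"
proof -
  show eq: "pc_eq E (inv_word g @ u @ g) w0"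
    unfolding w0_def by (intro pc_eq_append pc_eq_inv_word pc_eq_pc_nf)
  have "length w0 = pc_len E (inv_word g) + pc_len E u + pc_len E g"
    unfolding w0_def using pc_len_inv_word[of g] pc_len_eq_length_pc_nf by simp
  then show "pc_len E w0 = length w0" using assms(1) pc_len_cong[OF eq] by simp
qed

lemma conjugator_centralises_if_link:
  assumes cmv: "cyc_minimal E v" and rtv: "root_element E v" and connv: "Phi_connected E (pc_alpha E v)"
    and uL: "pc_alpha E u \<subseteq> pc_link E (pc_alpha E v)"
    and geod: "pc_len E (inv_word g @ u @ g) = pc_len E (inv_word g) + pc_len E u + pc_len E g"
    and cw: "pc_eq E ((inv_word g @ u @ g) @ v) (v @ inv_word g @ u @ g)"
  shows "pc_eq E (g @ v) (v @ g)"
proof -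
  define B where "B = pc_alpha E v"
  define L where "L = pc_link E B"
  define w where "w = inv_word g @ u @ g"
  have BL: "B \<inter> L = {}" unfolding L_def pc_link_def by blast
  obtain s k z where s: "s = pc_nf E v \<or> s = inv_word (pc_nf E v)"
      and ws: "pc_eq E w (word_pow s k @ z)" and zL: "gens z \<subseteq> L"
    using centraliser_of_block[OF cmv rtv connv, of w] cw B_def L_def w_def by auto
  have sB: "gens (word_pow s k) \<subseteq> B"
    using gens_word_pow_subset[of s k] gens_pc_nf_or_inv[OF s] B_def by simp
  have "gens (pc_nf E u) \<subseteq> L" using uL pc_alpha_eq_pc_nf[of u] B_def L_def by simp
  then have "gens (pc_nf E u) \<inter> B = {}" using BL by blast
  then have "restrict_gens B (pc_nf E u) = []" by (rule restrict_gens_Nil)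
  then have "pc_eq E (restrict_gens B u) []" using pc_eq_restrict_gens[OF pc_eq_pc_nf[of u], of B] by simp
  then have "pc_eq E (restrict_gens B w) []" unfolding w_def by (rule pc_eq_restrict_gens_conj_Nil)
  then have "pc_eq E (word_pow s k) []"
    using pc_eq_restrict_gens_link(1)[OF ws sB zL[unfolded L_def]] pc_eq_sym pc_eq_trans by blast
  then have "pc_eq E w z" using ws pc_eq_append_right[of E "word_pow s k" "[]" z] pc_eq_trans by fastforce
  moreover note w0 = conj_pc_nf_geodesic[OF geod]
  ultimately have "pc_eq E (inv_word (pc_nf E g) @ pc_nf E u @ pc_nf E g) z"
    using pc_eq_sym pc_eq_trans unfolding w_def by blast
  then have "gens (inv_word (pc_nf E g) @ pc_nf E u @ pc_nf E g) \<subseteq> L"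
    using geodesic_alphabet_subset[OF _ w0(2) zL] by blast
  then have gL: "gens (pc_nf E g) \<subseteq> L" by auto
  have "pc_eq E (pc_nf E g @ pc_nf E v) (pc_nf E v @ pc_nf E g)"
    using gL pc_alpha_eq_pc_nf[of v] B_def L_def by (intro pc_eq_commute_link) auto
  then have "pc_eq E (g @ v) (pc_nf E v @ pc_nf E g)"
    using pc_eq_append[OF pc_eq_pc_nf pc_eq_pc_nf] pc_eq_trans by blast
  then show ?thesis using pc_eq_append[OF pc_eq_pc_nf pc_eq_pc_nf, of v g] pc_eq_sym pc_eq_trans by blast
qed

lemma conjugator_trivial_if_power:
  assumes cmv: "cyc_minimal E v" and rtv: "root_element E v" and connv: "Phi_connected E (pc_alpha E v)"
    and rtu: "root_element E u" and us: "pc_eq E u s" and s: "s = pc_nf E v \<or> s = inv_word (pc_nf E v)"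
    and geod: "pc_len E (inv_word g @ u @ g) = pc_len E (inv_word g) + pc_len E u + pc_len E g"
    and cw: "pc_eq E ((inv_word g @ u @ g) @ v) (v @ inv_word g @ u @ g)"
  shows "pc_eq E g []"
proof -
  define B where "B = pc_alpha E v"
  define L where "L = pc_link E B"
  define w where "w = inv_word g @ u @ g"
  have BL: "B \<inter> L = {}" unfolding L_def pc_link_def by blast
  have len_s: "pc_len E s' = length (pc_nf E v)" if "s' = pc_nf E v \<or> s' = inv_word (pc_nf E v)" for s'
    using that pc_len_pc_nf pc_len_inv_word by auto
  obtain s' k z where s': "s' = pc_nf E v \<or> s' = inv_word (pc_nf E v)"
      and ws: "pc_eq E w (word_pow s' k @ z)" and zL: "gens z \<subseteq> L"
    using centraliser_of_block[OF cmv rtv connv, of w] cw B_def L_def w_def by auto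
  have "restrict_gens L s = []" using gens_pc_nf_or_inv[OF s] BL B_def by (intro restrict_gens_Nil) auto
  then have "pc_eq E (restrict_gens L u) []" using pc_eq_restrict_gens[OF us, of L] by simp
  then have "pc_eq E (restrict_gens L w) []" unfolding w_def by (rule pc_eq_restrict_gens_conj_Nil)
  then have "pc_eq E z []"
    using pc_eq_restrict_gens_link(2)[OF ws _ zL[unfolded L_def]] gens_word_pow_subset[of s' k]
      gens_pc_nf_or_inv[OF s'] B_def L_def pc_eq_sym pc_eq_trans by metis
  then have wk: "pc_eq E w (word_pow s' k)"
    using ws pc_eq_append_left[of E z "[]" "word_pow s' k"] pc_eq_trans by fastforce
  have "pc_eq E u (g @ w @ inv_word g)"
    using pc_eq_context[OF pc_eq_sym[OF pc_eq_right_inverse[of E g]], of "[]" "u @ g @ inv_word g"]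
      pc_eq_context[OF pc_eq_sym[OF pc_eq_right_inverse[of E g]], of u "[]"] pc_eq_trans w_def
    by fastforce
  also have "pc_eq E \<dots> (g @ word_pow s' k @ inv_word g)" by (rule pc_eq_context[OF wk])
  also have "pc_eq E \<dots> (word_pow (g @ s' @ inv_word g) k)"
    using pc_eq_sym[OF pc_eq_word_pow_conj[of E "inv_word g" s' k]] by simp
  finally have "pc_eq E u (word_pow (g @ s' @ inv_word g) k)" .
  then have "k = 1" by (rule root_element_word_pow_exponent[OF rtu])
  then have "pc_eq E w s'" using wk by simp
  then have "pc_len E w = pc_len E u"
    using pc_len_cong len_s[OF s'] len_s[OF s] pc_len_cong[OF us] by metis
  then have "pc_len E g = 0" using geod pc_len_inv_word[of g] w_def by simp
  then show ?thesis by (rule pc_eq_Nil_if_pc_len_0)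
qed

end

theorem corollary2p6:
  fixes E :: "'a::finite \<Rightarrow> 'a \<Rightarrow> bool"
    and u v g :: "'a letter list"
  assumes "symp E" and "irreflp E"
    and "cyc_minimal E u" and "root_element E u" and "is_block E u"
    and "cyc_minimal E v" and "root_element E v" and "is_block E v"
    and "pc_len E (inv_word g @ u @ g) = pc_len E (inv_word g) + pc_len E u + pc_len E g"
    and "in_centraliser E u v"
    and "in_centraliser E (inv_word g @ u @ g) v"
  shows "in_centraliser E g v"
proof -
  interpret pc_graph E using assms(1,2) by unfold_locales
  have connu: "Phi_connected E (pc_alpha E u)" and connv: "Phi_connected E (pc_alpha E v)"
    using assms(5,8) unfolding is_block_def by blast+
  have cu: "pc_eq E (u @ v) (v @ u)" and cw: "pc_eq E ((inv_word g @ u @ g) @ v) (v @ inv_word g @ u @ g)"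
    using assms(10,11) unfolding in_centraliser_def by simp_all
  from commuting_root_block_cases[OF assms(6,7) connv assms(4) connu cu] show ?thesis
  proof (elim disjE exE)
    assume "pc_alpha E u \<subseteq> pc_link E (pc_alpha E v)"
    from conjugator_centralises_if_link[OF assms(6,7) connv this assms(9) cw] show ?thesis
      unfolding in_centraliser_def .
  next
    fix s assume "(s = pc_nf E v \<or> s = inv_word (pc_nf E v)) \<and> pc_eq E u s"
    then have g: "pc_eq E g []"
      using conjugator_trivial_if_power[OF assms(6,7) connv assms(4) _ _ assms(9) cw] by blast
    have "pc_eq E (g @ v) ([] @ v)" using g by (rule pc_eq_append_right)
    moreover have "pc_eq E (v @ []) (v @ g)" using pc_eq_sym[OF g] by (rule pc_eq_append_left)
    ultimately show ?thesis unfolding in_centraliser_def using pc_eq_trans by auto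
  qed
qed

end
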